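(* Let $q$ be a prime power, let $\gamma$ be a primitive element of $\mathbb{F}_{q^2}$, and for any integer $a$ let $h_a(x)\in\mathbb{F}_q[x]$ denote the minimal polynomial of $\gamma^{-a}$ over $\mathbb{F}_q$. For integers $e_1,e_2$, let $\mathcal{C}_{((q+1)e_1,e_2)}$ be the cyclic code of length $q^2-1$ over $\mathbb{F}_q$ whose parity-check polynomial is $h_{(q+1)e_1}(x)h_{e_2}(x)$. Suppose $\gcd(q-1,2e_1-e_2)=1$ and $\gcd(q+1,e_2)=1$. Then: (A) $\deg(h_{(q+1)e_1}(x))=1$ and $\deg(h_{e_2}(x))=2$. Moreover, $h_{(q+1)e_1}(x)$ and $h_{e_2}(x)$ are the parity-check polynomials of two different one-weight cyclic codes of length $q^2-1$ over $\mathbb{F}_q$, whose (unique) nonzero weights are $q^2-1$ and $q(q-1)$, respectively. (B) $\mathcal{C}_{((q+1)e_1,e_2)}$ is an optimal three-weight $[q^2-1,3,q(q-1)-1]$ cyclic code over $\mathbb{F}_q$ whose weight distribution is: weight $0$ with frequency $1$; weight $q(q-1)-1$ with frequency $(q-1)(q^2-1)$; weight $q(q-1)$ with frequency $q^2-1$; weight $q^2-1$ with frequency $q-1$ (and no other weights occur). Moreover, if $B_j$ ($0<j\le q^2-1$) denotes the number of codewords of weight $j$ in the dual code of $\mathcal{C}_{((q+1)e_1,e_2)}$, then $B_1=B_2=0$ and $$B_3=\frac{(q^2-3)(q^2-1)(q-2)(q-1)}{6}.$$ Consequently, if $q>2$, the dual code of $\mathcal{C}_{((q+1)e_1,e_2)}$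 is a single-error-correcting cyclic code with parameters $[q^2-1,q^2-4,3]$.
   Context: A linear $[n,k,d]$ code over $\mathbb{F}_q$ is called optimal here if its length attains the Griesmer lower bound, i.e. $n=\sum_{i=0}^{k-1}\lceil d/q^i\rceil$. A one-weight (resp. three-weight) code is one having exactly one (resp. three) distinct nonzero Hamming weights. *)

theory Defs
  imports "HOL-Computational_Algebra.Polynomial" "HOL-Library.Cardinality"
begin

text \<open>Codewords of length n over a field 'a are represented as polynomials c of
  degree < n, the word being (coeff c 0, ..., coeff c (n-1)).\<close>

definition hamming_wt :: "nat \<Rightarrow> 'a::zero poly \<Rightarrow> nat" where
  "hamming_wt n c = card {i. i < n \<and> coeff c i \<noteq> 0}"

text \<open>The cyclic code of length n with parity-check polynomial h (a divisor of x^n - 1):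
  the ideal of F[x]/(x^n-1) generated by g = (x^n - 1)/h.\<close>
definition cyclic_code_pc :: "nat \<Rightarrow> 'a::field poly \<Rightarrow> 'a poly set" where
  "cyclic_code_pc n h = {c. degree c < n \<and> ((monom 1 n - 1) div h) dvd c}"

definition dual_code :: "nat \<Rightarrow> 'a::field poly set \<Rightarrow> 'a poly set" where
  "dual_code n C = {d. degree d < n \<and> (\<forall>c\<in>C. (\<Sum>i<n. coeff c i * coeff d i) = 0)}"

definition is_cyclic :: "nat \<Rightarrow> 'a::field poly set \<Rightarrow> bool" where
  "is_cyclic n C = (\<forall>c\<in>C. (monom 1 1 * c) mod (monom 1 n - 1) \<in> C)"

definition nonzero_weights :: "nat \<Rightarrow> 'a::zero poly set \<Rightarrow> nat set" where
  "nonzero_weights n C = {hamming_wt n c | c. c \<in> C \<and> c \<noteq> 0}"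

definition min_dist :: "nat \<Rightarrow> 'a::zero poly set \<Rightarrow> nat" where
  "min_dist n C = Min (nonzero_weights n C)"

definition weight_freq :: "nat \<Rightarrow> 'a::zero poly set \<Rightarrow> nat \<Rightarrow> nat" where
  "weight_freq n C w = card {c \<in> C. hamming_wt n c = w}"

definition is_linear_code :: "nat \<Rightarrow> 'a::{field,finite} poly set \<Rightarrow> bool" where
  "is_linear_code n C = (0 \<in> C \<and> (\<forall>c\<in>C. degree c < n) \<and>
     (\<forall>c\<in>C. \<forall>d\<in>C. c + d \<in> C) \<and> (\<forall>a. \<forall>c\<in>C. smult a c \<in> C))"

definition code_params :: "nat \<Rightarrow> nat \<Rightarrow> nat \<Rightarrow> 'a::{field,finite} poly set \<Rightarrow> bool" where
  "code_params n k d C = (is_linear_code n C \<and> card C = CARD('a) ^ k \<and> min_dist n C = d)"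

definition griesmer_optimal :: "nat \<Rightarrow> nat \<Rightarrow> nat \<Rightarrow> 'a::{field,finite} itself \<Rightarrow> bool" where
  "griesmer_optimal n k d _ = (int n = (\<Sum>i<k. \<lceil>real d / real (CARD('a) ^ i)\<rceil>))"

definition min_poly :: "('a::field \<Rightarrow> 'b::field) \<Rightarrow> 'b \<Rightarrow> 'a poly" where
  "min_poly emb \<beta> = (THE p. lead_coeff p = 1 \<and> poly (map_poly emb p) \<beta> = 0 \<and>
      (\<forall>r. r \<noteq> 0 \<and> poly (map_poly emb r) \<beta> = 0 \<longrightarrow> degree p \<le> degree r))"

definition field_embedding :: "('a::field \<Rightarrow> 'b::field) \<Rightarrow> bool" where
  "field_embedding emb = (inj emb \<and> emb 0 = 0 \<and> emb 1 = 1 \<and>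
     (\<forall>x y. emb (x + y) = emb x + emb y) \<and> (\<forall>x y. emb (x * y) = emb x * emb y))"

definition primitive_element :: "'b::{field,finite} \<Rightarrow> bool" where
  "primitive_element \<gamma> = (\<gamma> \<noteq> 0 \<and> (\<forall>k. 0 < k \<and> k < CARD('b) - 1 \<longrightarrow> \<gamma> ^ k \<noteq> 1))"

end

theory Submission
  imports Defs "HOL-Computational_Algebra.Primes" "HOL-Number_Theory.Cong"
begin

text \<open>
  Put \<zeta> = \<gamma>^((q+1) e1), \<delta> = \<gamma>^e2 and \<rho> = \<delta>/\<zeta>. As \<zeta>^(q-1) = 1, \<zeta> lies in F_q and
  h_((q+1) e1) is linear, while gcd(q+1, e2) = 1 keeps \<delta> outside F_q, so h_e2 is the quadratic
  (x - \<delta>^-1)(x - \<delta>^-q). The codewords are c_i = u \<zeta>^i + Tr(v \<delta>^i) = \<zeta>^i (u + Tr(v \<rho>^i))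
  with u in F_q and v in F_(q^2). The two gcd hypotheses make \<rho> primitive, so the zeros of a
  codeword correspond to the nonzero y with Tr(v y) = -u; since the trace maps F_(q^2) onto F_q
  q-to-1, this gives the three weights and their frequencies.

  A dual word d vanishes at \<zeta> and \<delta>, i.e. \<Sum> \<alpha>_i = \<Sum> \<alpha>_i \<rho>^i = 0 over its support, where
  \<alpha>_i = d_i \<zeta>^i lies in F_q. Such relations need at least three terms, and the weight-3 words,
  with an ordering of their support, correspond to the values \<alpha>_i, \<alpha>_j in F_q^* with nonzero
  sum and the points \<rho>^i \<noteq> \<rho>^j with \<alpha>_i \<rho>^i + \<alpha>_j \<rho>^j \<noteq> 0: there are
  (q-1)(q-2) n (n-2) of them, n = q^2 - 1.
\<close>

section \<open>Finite fields\<close>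

lemma finite_field_power_CARD:
  fixes x :: "'a::{field,finite}"
  shows "x ^ CARD('a) = x"
proof (cases "x = 0")
  case True
  then show ?thesis by (simp add: zero_power)
next
  case False
  let ?U = "UNIV - {0::'a}"
  have "bij_betw ((*) x) ?U ?U"
    using False by (intro bij_betw_byWitness[of _ "\<lambda>y. y / x"]) auto
  then have "(\<Prod>y\<in>?U. x * y) = (\<Prod>y\<in>?U. y)"
    by (rule prod.reindex_bij_betw)
  then have "x ^ card ?U * \<Prod>?U = 1 * \<Prod>?U"
    by (simp add: prod.distrib)
  then have unit: "x ^ card ?U = 1"
    by (subst (asm) mult_cancel_right) simp
  have "CARD('a) = Suc (card ?U)"
    by (simp add: card_Diff_singleton_if)
  then have "x ^ CARD('a) = x * x ^ card ?U"
    by (simp only: power_Suc)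
  with unit show ?thesis by (simp only: mult_1_right)
qed

lemma prime_CHAR_finite_field: "prime CHAR('a::{field,finite})"
  by (rule prime_CHAR_semidom, rule finite_imp_CHAR_pos) simp

definition add_closed :: "'a::field set \<Rightarrow> bool" where
  "add_closed S \<longleftrightarrow> 0 \<in> S \<and> (\<forall>x\<in>S. \<forall>y\<in>S. x + y \<in> S)"

lemma add_closed_add: "add_closed S \<Longrightarrow> x \<in> S \<Longrightarrow> y \<in> S \<Longrightarrow> x + y \<in> S"
  by (simp add: add_closed_def)

lemma add_closed_of_nat_mult: "add_closed S \<Longrightarrow> x \<in> S \<Longrightarrow> of_nat m * x \<in> S"
  by (induction m) (auto simp: add_closed_def distrib_right)

lemma add_closed_uminus:
  fixes S :: "'a::{field,finite} set"
  assumes "add_closed S" "x \<in> S"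
  shows "- x \<in> S"
proof -
  have "of_nat (CHAR('a) - 1) + 1 = (of_nat CHAR('a) :: 'a)"
    using prime_gt_0_nat[OF prime_CHAR_finite_field[where 'a='a]] by (simp add: of_nat_diff)
  then have "of_nat (CHAR('a) - 1) = (-1 :: 'a)"
    by (simp add: eq_neg_iff_add_eq_0)
  with add_closed_of_nat_mult[OF assms, of "CHAR('a) - 1"] show ?thesis by simp
qed

lemma add_closed_of_nat_mult_notin:
  fixes S :: "'a::{field,finite} set"
  assumes S: "add_closed S" and a: "a \<notin> S" and m: "0 < m" "m < CHAR('a)"
  shows "of_nat m * a \<notin> S"
proof
  assume in_S: "of_nat m * a \<in> S"
  have "\<not> CHAR('a) dvd m"
    using m by (auto dest: dvd_imp_le)
  then have "coprime CHAR('a) m"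
    by (intro prime_imp_coprime prime_CHAR_finite_field)
  then have "coprime m CHAR('a)"
    by (simp only: coprime_commute)
  then obtain j where "[m * j = Suc 0] (mod CHAR('a))"
    using cong_solve_coprime_nat by blast
  then have "(of_nat (m * j) :: 'a) = of_nat (Suc 0)"
    unfolding of_nat_eq_iff_cong_CHAR .
  then have "of_nat j * (of_nat m :: 'a) = 1"
    by (simp add: mult.commute)
  then have "a = of_nat j * (of_nat m * a)"
    by (simp flip: mult.assoc)
  then have "a \<in> S"
    using add_closed_of_nat_mult[OF S in_S, of j] by (rule ssubst)
  with a show False
    by contradiction
qed

definition add_extend :: "'a::{field,finite} set \<Rightarrow> 'a \<Rightarrow> 'a set" where
  "add_extend S a = (\<lambda>(s, k). s + of_nat k * a) ` (S \<times> {..<CHAR('a)})"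

lemma of_nat_mod_CHAR: "of_nat (m mod CHAR('a)) = (of_nat m :: 'a::field)"
  by (metis of_nat_eq_iff_cong_CHAR cong_mod_left cong_refl)

lemma add_closed_add_extend:
  fixes S :: "'a::{field,finite} set"
  assumes S: "add_closed S"
  shows "add_closed (add_extend S a)"
  unfolding add_closed_def add_extend_def
proof safe
  show "0 \<in> (\<lambda>(s, k). s + of_nat k * a) ` (S \<times> {..<CHAR('a)})"
    using S prime_gt_0_nat[OF prime_CHAR_finite_field[where 'a='a]] unfolding add_closed_def
    by (auto intro!: image_eqI[of _ _ "(0, 0)"])
next
  fix s k s' k' assume h: "s \<in> S" "k < CHAR('a)" "s' \<in> S" "k' < CHAR('a)"
  have "s + of_nat k * a + (s' + of_nat k' * a) = (s + s') + of_nat ((k + k') mod CHAR('a)) * a"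
    by (simp add: of_nat_mod_CHAR algebra_simps)
  moreover have "s + s' \<in> S"
    using S h by (simp add: add_closed_add)
  moreover have "(k + k') mod CHAR('a) < CHAR('a)"
    using prime_gt_0_nat[OF prime_CHAR_finite_field[where 'a='a]] by simp
  ultimately show "s + of_nat k * a + (s' + of_nat k' * a) \<in>
      (\<lambda>(s, k). s + of_nat k * a) ` (S \<times> {..<CHAR('a)})"
    by (auto intro!: image_eqI[of _ _ "(s + s', (k + k') mod CHAR('a))"])
qed

lemma card_add_extend:
  fixes S :: "'a::{field,finite} set"
  assumes S: "add_closed S" and a: "a \<notin> S"
  shows "card (add_extend S a) = card S * CHAR('a)"
proof -
  have less_impossible: False
    if h: "s \<in> S" "s' \<in> S" "k' < k" "k < CHAR('a)" "s + of_nat k * a = s' + of_nat k' * a"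
    for s s' k k'
  proof -
    have "of_nat (k - k') * a = s' + - s"
      using h(3,5) by (simp add: of_nat_diff algebra_simps)
    also have "\<dots> \<in> S"
      using add_closed_add[OF S h(2) add_closed_uminus[OF S h(1)]] .
    finally have "of_nat (k - k') * a \<in> S" .
    moreover have "of_nat (k - k') * a \<notin> S"
      using h(3,4) by (intro add_closed_of_nat_mult_notin[OF S a]) simp_all
    ultimately show False
      by contradiction
  qed
  have "inj_on (\<lambda>(s, k). s + of_nat k * a) (S \<times> {..<CHAR('a)})"
  proof (rule inj_onI, clarify)
    fix s k s' k'
    assume h: "s \<in> S" "k < CHAR('a)" "s' \<in> S" "k' < CHAR('a)" "s + of_nat k * a = s' + of_nat k' * a"
    have "k = k'"
    proof (rule linorder_cases[of k k'])
      assume "k < k'"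
      then show ?thesis using less_impossible[of s' s k k'] h by simp
    next
      assume "k' < k"
      then show ?thesis using less_impossible[of s s' k' k] h by simp
    qed
    with h(5) show "s = s' \<and> k = k'"
      by simp
  qed
  then show ?thesis
    unfolding add_extend_def by (simp add: card_image card_cartesian_product)
qed

lemma CARD_eq_CHAR_power: "\<exists>k. CARD('a::{field,finite}) = CHAR('a) ^ k"
proof (rule ccontr)
  assume no_power: "\<nexists>k. CARD('a) = CHAR('a) ^ k"
  have "\<exists>S :: 'a set. add_closed S \<and> card S = CHAR('a) ^ j" for j
  proof (induction j)
    case 0
    show ?case by (intro exI[of _ "{0}"]) (auto simp: add_closed_def)
  next
    case (Suc j)
    then obtain S :: "'a set" where S: "add_closed S" "card S = CHAR('a) ^ j" by blast
    have "S \<noteq> UNIV" using S(2) no_power by auto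
    then obtain a where "a \<notin> S" by blast
    then have "add_closed (add_extend S a) \<and> card (add_extend S a) = CHAR('a) ^ Suc j"
      using add_closed_add_extend[OF S(1)] card_add_extend[OF S(1)] S(2) by (simp add: mult.commute)
    then show ?case by blast
  qed
  then obtain S :: "'a set" where "card S = CHAR('a) ^ CARD('a)" by blast
  moreover have "card S \<le> CARD('a)" by (rule card_mono) auto
  moreover have "CARD('a) < CHAR('a) ^ CARD('a)"
    using prime_CHAR_finite_field[where 'a='a]
    by (intro power_gt_expt) (auto simp: prime_gt_Suc_0_nat)
  ultimately show False by simp
qed

lemma CARD_field_ge_2: "2 \<le> CARD('a::{field,finite})"
proof -
  have "card {0, 1::'a} \<le> CARD('a)" by (rule card_mono) auto
  then show ?thesis by simp
qed

section \<open>Polynomial codes\<close>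

lemma card_polys_coeff_vanishing:
  "card {p :: 'a::{zero,finite} poly. \<forall>i\<ge>k. coeff p i = 0} = CARD('a) ^ k"
proof (induction k)
  case 0
  have "{p :: 'a poly. \<forall>i\<ge>0. coeff p i = 0} = {0}" by (auto simp: poly_eq_iff)
  then show ?case by simp
next
  case (Suc k)
  let ?P = "\<lambda>k. {p :: 'a poly. \<forall>i\<ge>k. coeff p i = 0}"
  have "?P (Suc k) = (\<lambda>(a, p). pCons a p) ` (UNIV \<times> ?P k)"
  proof (intro set_eqI iffI)
    fix p assume "p \<in> ?P (Suc k)"
    moreover obtain a r where "p = pCons a r" by (cases p)
    ultimately show "p \<in> (\<lambda>(a, p). pCons a p) ` (UNIV \<times> ?P k)"
      by force
  next
    fix p assume "p \<in> (\<lambda>(a, p). pCons a p) ` (UNIV \<times> ?P k)"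
    then show "p \<in> ?P (Suc k)"
      by (auto simp: coeff_pCons split: nat.split)
  qed
  moreover have "inj_on (\<lambda>(a, p). pCons a p) (UNIV \<times> ?P k)"
    by (auto simp: inj_on_def)
  ultimately show ?case
    using Suc.IH by (simp add: card_image card_cartesian_product)
qed

lemma coeffs_vanish_from_iff_degree_less:
  fixes m :: "'a::zero poly"
  assumes "m \<noteq> 0"
  shows "(\<forall>i\<ge>k. coeff m i = 0) \<longleftrightarrow> degree m < k"
proof
  assume "\<forall>i\<ge>k. coeff m i = 0"
  then have "coeff m (degree m) = 0 \<or> degree m < k"
    using not_less by blast
  then show "degree m < k"
    using assms by simp
qed (auto intro: coeff_eq_0)

lemma card_multiples_degree_less:
  fixes H :: "'a::{field,finite} poly"
  assumes H: "H \<noteq> 0" "degree H \<le> n" and n: "0 < n"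
  shows "card {c. degree c < n \<and> H dvd c} = CARD('a) ^ (n - degree H)"
proof -
  let ?P = "{m :: 'a poly. \<forall>i\<ge>n - degree H. coeff m i = 0}"
  have bounded_iff: "m \<in> ?P \<longleftrightarrow> degree (H * m) < n" for m
  proof (cases "m = 0")
    case False
    then show ?thesis
      using H by (simp add: coeffs_vanish_from_iff_degree_less degree_mult_eq less_diff_conv add.commute)
  qed (simp add: n)
  have "{c. degree c < n \<and> H dvd c} = (\<lambda>m. H * m) ` ?P"
  proof (intro set_eqI iffI)
    fix c assume "c \<in> {c. degree c < n \<and> H dvd c}"
    then obtain m where "c = H * m" "degree (H * m) < n"
      by (auto elim!: dvdE)
    then show "c \<in> (\<lambda>m. H * m) ` ?P"
      using bounded_iff by blast
  qed (use bounded_iff in auto)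
  moreover have "inj_on (\<lambda>m. H * m) ?P"
    using H by (auto simp: inj_on_def)
  ultimately show ?thesis
    by (simp add: card_image card_polys_coeff_vanishing)
qed

lemma degree_monom_1_minus_1: "0 < n \<Longrightarrow> degree (monom 1 n - 1 :: 'a::field poly) = n"
  by (simp add: degree_monom_eq degree_add_eq_left[of "-1" "monom 1 n", simplified])

lemma card_cyclic_code_pc:
  fixes H :: "'a::{field,finite} poly"
  assumes n: "0 < n" and H: "H dvd monom 1 n - 1"
  shows "card (cyclic_code_pc n H) = CARD('a) ^ degree H"
proof -
  obtain g where g: "monom 1 n - 1 = H * g"
    using H by (elim dvdE)
  have "monom 1 n - 1 \<noteq> (0 :: 'a poly)"
    using degree_monom_1_minus_1[OF n, where 'a='a] n by auto
  then have nonzero: "H \<noteq> 0" "g \<noteq> 0"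
    using g by auto
  then have deg: "degree g + degree H = n"
    using g degree_monom_1_minus_1[OF n, where 'a='a] by (simp add: degree_mult_eq)
  have "(monom 1 n - 1) div H = g"
    using nonzero g by simp
  then have "card (cyclic_code_pc n H) = CARD('a) ^ (n - degree g)"
    unfolding cyclic_code_pc_def using nonzero deg n by (simp add: card_multiples_degree_less)
  also have "n - degree g = degree H"
    using deg by simp
  finally show ?thesis .
qed

lemma is_linear_code_cyclic_code_pc:
  fixes H :: "'a::{field,finite} poly"
  shows "0 < n \<Longrightarrow> is_linear_code n (cyclic_code_pc n H)"
  unfolding is_linear_code_def cyclic_code_pc_def
  by (auto intro: degree_add_less dvd_add dvd_smult le_less_trans[OF degree_smult_le])

lemma is_linear_code_dual_code:
  fixes C :: "'a::{field,finite} poly set"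
  assumes "0 < n"
  shows "is_linear_code n (dual_code n C)"
proof -
  have "(\<Sum>i<n. coeff c i * (coeff d i + coeff d' i)) =
      (\<Sum>i<n. coeff c i * coeff d i) + (\<Sum>i<n. coeff c i * coeff d' i)"
    and "(\<Sum>i<n. coeff c i * (a * coeff d i)) = a * (\<Sum>i<n. coeff c i * coeff d i)"
    for c d d' :: "'a poly" and a
    by (simp_all add: distrib_left sum.distrib sum_distrib_left algebra_simps)
  then show ?thesis
    unfolding is_linear_code_def dual_code_def using assms
    by (auto intro: degree_add_less le_less_trans[OF degree_smult_le])
qed

lemma hamming_wt_le: "hamming_wt n c \<le> n"
  unfolding hamming_wt_def by (rule card_mono[of "{..<n}", simplified]) auto

lemma hamming_wt_eq_0_iff:
  assumes "degree c < n"
  shows "hamming_wt n c = 0 \<longleftrightarrow> c = 0"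
proof
  assume "hamming_wt n c = 0"
  then have low: "coeff c i = 0" if "i < n" for i
    using that unfolding hamming_wt_def by auto
  show "c = 0"
  proof (rule poly_eqI)
    fix i
    show "coeff c i = coeff 0 i"
      using low[of i] assms by (cases "i < n") (simp_all add: coeff_eq_0)
  qed
qed (simp add: hamming_wt_def)

lemma min_dist_eqI:
  assumes "c \<in> C" "c \<noteq> 0" "hamming_wt n c = d"
    and "\<And>c. c \<in> C \<Longrightarrow> c \<noteq> 0 \<Longrightarrow> d \<le> hamming_wt n c"
  shows "min_dist n C = d"
proof -
  have "nonzero_weights n C \<subseteq> {..n}"
    by (auto simp: nonzero_weights_def hamming_wt_le)
  then show ?thesis
    unfolding min_dist_def using assms
    by (intro Min_eqI) (auto simp: nonzero_weights_def intro: finite_subset)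
qed

lemma griesmer_optimal_length_q2_minus_1:
  "griesmer_optimal (CARD('a)^2 - 1) 3 (CARD('a) * (CARD('a) - 1) - 1) TYPE('a::{field,finite})"
proof -
  define q where "q = CARD('a)"
  define d where "d = q * (q - 1) - 1"
  have q: "real q \<ge> 2"
    using CARD_field_ge_2[where 'a='a] unfolding q_def by simp
  have "q * (q - 1) \<ge> 1" "q * q \<ge> 1"
    using CARD_field_ge_2[where 'a='a] unfolding q_def by (simp_all add: Suc_le_eq)
  then have rd: "real d = real q * real q - real q - 1"
    using q unfolding d_def by (simp add: of_nat_diff algebra_simps)
  have "\<lceil>real d / real q\<rceil> = int q - 1"
    using q rd by (intro ceiling_unique) (simp_all add: field_simps)
  moreover have "\<lceil>real d / real (q * q)\<rceil> = 1"
  proof (intro ceiling_unique)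
    have "real q * real q \<ge> 2 * real q"
      using q by (intro mult_right_mono) auto
    then have "real d > 0"
      using q rd by linarith
    then show "real_of_int 1 - 1 < real d / real (q * q)" "real d / real (q * q) \<le> real_of_int 1"
      using q rd by (simp_all add: field_simps)
  qed
  moreover have "int d + int q = int (q ^ 2 - 1)"
  proof -
    have "q * (q - 1) = q * q - q"
      by (simp add: diff_mult_distrib2)
    moreover have "2 * q \<le> q * q"
      using CARD_field_ge_2[where 'a='a] unfolding q_def by (intro mult_right_mono) auto
    ultimately have "d + q = q ^ 2 - 1"
      unfolding d_def power2_eq_square by linarith
    then show ?thesis
      by (simp only: of_nat_add[symmetric])
  qed
  moreover have "(\<Sum>i<3. \<lceil>real d / real (q ^ i)\<rceil>) =
      \<lceil>real d\<rceil> + \<lceil>real d / real q\<rceil> + \<lceil>real d / real (q * q)\<rceil>"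
    by (simp add: numeral_3_eq_3 power2_eq_square)
  ultimately show ?thesis
    unfolding griesmer_optimal_def q_def[symmetric] d_def[symmetric] by simp
qed

definition ordered_triples :: "'a set \<Rightarrow> ('a \<times> 'a \<times> 'a) set" where
  "ordered_triples S = {(i, j, k). i \<noteq> j \<and> i \<noteq> k \<and> j \<noteq> k \<and> S = {i, j, k}}"

lemma finite_ordered_triples: "finite S \<Longrightarrow> finite (ordered_triples S)"
  by (rule finite_subset[of _ "S \<times> S \<times> S"]) (auto simp: ordered_triples_def)

lemma card_ordered_triples: "card S = 3 \<Longrightarrow> card (ordered_triples S) = 6"
proof -
  assume "card S = 3"
  then obtain a b c where S: "S = {a, b, c}" "a \<noteq> b" "b \<noteq> c" "a \<noteq> c"
    by (auto simp: card_3_iff)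
  have "ordered_triples S = {(a, b, c), (a, c, b), (b, a, c), (b, c, a), (c, a, b), (c, b, a)}"
  proof (intro set_eqI iffI)
    fix t assume "t \<in> ordered_triples S"
    then obtain i j k where t: "t = (i, j, k)" "i \<noteq> j" "i \<noteq> k" "j \<noteq> k" "{i, j, k} = {a, b, c}"
      unfolding ordered_triples_def S by auto
    then have "i \<in> {a, b, c}" "j \<in> {a, b, c}" "k \<in> {a, b, c}"
      by blast+
    with t(1-4) show "t \<in> {(a, b, c), (a, c, b), (b, a, c), (b, c, a), (c, a, b), (c, b, a)}"
      by auto
  next
    fix t assume "t \<in> {(a, b, c), (a, c, b), (b, a, c), (b, c, a), (c, a, b), (c, b, a)}"
    then show "t \<in> ordered_triples S"
      unfolding ordered_triples_def S using S(2-4) by (auto simp: insert_commute)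
  qed
  then show ?thesis using S(2-4) by simp
qed

section \<open>Minimal polynomials over a subfield\<close>

locale subfield_embedding =
  fixes emb :: "'a::field \<Rightarrow> 'b::field"
  assumes embedding: "field_embedding emb"
begin

lemma emb_0 [simp]: "emb 0 = 0"
  and emb_1 [simp]: "emb 1 = 1"
  and emb_add [simp]: "emb (x + y) = emb x + emb y"
  and emb_mult [simp]: "emb (x * y) = emb x * emb y"
  and inj_emb: "inj emb"
  using embedding unfolding field_embedding_def by auto

lemma emb_eq_iff [simp]: "emb x = emb y \<longleftrightarrow> x = y"
  using inj_emb by (auto dest: injD)

lemma emb_eq_0_iff [simp]: "emb x = 0 \<longleftrightarrow> x = 0"
  using emb_eq_iff[of x 0] by simp

lemma emb_minus [simp]: "emb (- x) = - emb x"
  using emb_add[of "- x" x] by (simp add: eq_neg_iff_add_eq_0)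

lemma emb_diff [simp]: "emb (x - y) = emb x - emb y"
  using emb_add[of x "- y"] by simp

lemma emb_power [simp]: "emb (x ^ k) = emb x ^ k"
  by (induction k) auto

lemma emb_inverse [simp]: "emb (inverse x) = inverse (emb x)"
proof (cases "x = 0")
  case False
  then have "emb (inverse x) * emb x = 1"
    by (simp flip: emb_mult)
  with False show ?thesis
    by (simp add: field_simps)
qed simp

lemma emb_divide [simp]: "emb (x / y) = emb x / emb y"
  by (simp add: divide_inverse)

lemma emb_sum [simp]: "emb (sum f A) = (\<Sum>i\<in>A. emb (f i))"
  by (induction A rule: infinite_finite_induct) auto

lemma emb_of_nat [simp]: "emb (of_nat k) = of_nat k"
  by (induction k) auto

definition emb_inv :: "'b \<Rightarrow> 'a" where
  "emb_inv = inv emb"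

lemma emb_emb_inv [simp]: "y \<in> range emb \<Longrightarrow> emb (emb_inv y) = y"
  unfolding emb_inv_def by (auto simp: f_inv_into_f)

lemma emb_inv_emb [simp]: "emb_inv (emb x) = x"
  unfolding emb_inv_def by (simp add: inj_emb)

abbreviation lift :: "'a poly \<Rightarrow> 'b poly" where
  "lift p \<equiv> map_poly emb p"

lemma coeff_lift [simp]: "coeff (lift p) i = emb (coeff p i)"
  by (simp add: coeff_map_poly)

lemma lift_add [simp]: "lift (p + r) = lift p + lift r"
  and lift_diff [simp]: "lift (p - r) = lift p - lift r"
  and lift_mult [simp]: "lift (p * r) = lift p * lift r"
  and lift_monom [simp]: "lift (monom c k) = monom (emb c) k"
  and lift_pCons [simp]: "lift (pCons c p) = pCons (emb c) (lift p)"
  by (auto intro!: poly_eqI simp: coeff_mult coeff_monom coeff_pCons split: nat.split)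

lemma degree_lift [simp]: "degree (lift p) = degree p"
  by (rule degree_map_poly) simp

lemma lift_eq_0_iff [simp]: "lift p = 0 \<longleftrightarrow> p = 0"
  by (metis degree_lift coeff_lift emb_eq_0_iff leading_coeff_0_iff)

lemma poly_lift_eq_sum:
  assumes "degree p < N"
  shows "poly (lift p) x = (\<Sum>i<N. emb (coeff p i) * x ^ i)"
proof -
  have "poly (lift p) x = (\<Sum>i\<le>degree p. emb (coeff p i) * x ^ i)"
    by (simp add: poly_altdef)
  also have "\<dots> = (\<Sum>i<N. emb (coeff p i) * x ^ i)"
    using assms by (intro sum.mono_neutral_left) (auto simp: coeff_eq_0)
  finally show ?thesis .
qed

lemma poly_lift_eq_0_if_dvd: "h dvd p \<Longrightarrow> poly (lift h) x = 0 \<Longrightarrow> poly (lift p) x = 0"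
  by (auto elim!: dvdE)

text \<open>The remainder of p modulo h would have more roots than its degree.\<close>
lemma dvd_if_lifted_roots:
  assumes h: "h \<noteq> 0" and R: "degree h \<le> card R"
    and h_roots: "\<And>x. x \<in> R \<Longrightarrow> poly (lift h) x = 0"
    and p_roots: "\<And>x. x \<in> R \<Longrightarrow> poly (lift p) x = 0"
  shows "h dvd p"
proof (rule ccontr)
  define r where "r = p mod h"
  assume "\<not> h dvd p"
  then have r: "r \<noteq> 0" "degree r < degree h"
    using degree_mod_less[OF h, of p] unfolding r_def by (auto simp: dvd_eq_mod_eq_0)
  have "R \<subseteq> {x. poly (lift r) x = 0}"
  proof
    fix x assume "x \<in> R"
    have "poly (lift p) x = poly (lift (h * (p div h) + r)) x"
      unfolding r_def mult_div_mod_eq ..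
    then have "poly (lift p) x = poly (lift h) x * poly (lift (p div h)) x + poly (lift r) x"
      by simp
    with h_roots[OF \<open>x \<in> R\<close>] p_roots[OF \<open>x \<in> R\<close>] show "x \<in> {x. poly (lift r) x = 0}"
      by simp
  qed
  then have "card R \<le> card {x. poly (lift r) x = 0}"
    using r by (intro card_mono poly_roots_finite) simp_all
  also have "\<dots> \<le> degree r"
    using card_poly_roots_bound[of "lift r"] r by simp
  finally show False
    using r R by simp
qed

lemma min_poly_eqI:
  assumes monic: "lead_coeff p = 1" and root: "poly (lift p) \<beta> = 0"
    and minimal: "\<And>r. r \<noteq> 0 \<Longrightarrow> poly (lift r) \<beta> = 0 \<Longrightarrow> degree p \<le> degree r"
  shows "min_poly emb \<beta> = p"
  unfolding min_poly_def
proof (rule the_equality)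
  show "lead_coeff p = 1 \<and> poly (lift p) \<beta> = 0 \<and>
      (\<forall>r. r \<noteq> 0 \<and> poly (lift r) \<beta> = 0 \<longrightarrow> degree p \<le> degree r)"
    using assms by blast
next
  fix p' assume p': "lead_coeff p' = 1 \<and> poly (lift p') \<beta> = 0 \<and>
      (\<forall>r. r \<noteq> 0 \<and> poly (lift r) \<beta> = 0 \<longrightarrow> degree p' \<le> degree r)"
  have nonzero: "p \<noteq> 0" "p' \<noteq> 0"
    using monic p' by auto
  then have deg: "degree p' = degree p"
    using minimal[of p'] p' root by (simp add: order.antisym)
  show "p' = p"
  proof (rule ccontr)
    assume "p' \<noteq> p"
    have "degree (p' - p) \<noteq> degree p"
    proof
      assume "degree (p' - p) = degree p"
      then have "lead_coeff (p' - p) = 0"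
        using monic p' deg by simp
      with \<open>p' \<noteq> p\<close> show False
        by (simp only: leading_coeff_0_iff right_minus_eq)
    qed
    then have "degree (p' - p) < degree p"
      using deg degree_diff_le[of p' "degree p" p] by simp
    moreover have "poly (lift (p' - p)) \<beta> = 0"
      using p' root by simp
    ultimately show False
      using minimal[of "p' - p"] \<open>p' \<noteq> p\<close> by simp
  qed
qed

lemma nonzero_const_not_root:
  assumes "r \<noteq> 0" "degree r = 0"
  shows "poly (lift r) x \<noteq> 0"
proof -
  have "lift r = [:emb (coeff r 0):]"
    using assms(2) by (intro poly_eqI) (auto simp: coeff_pCons coeff_eq_0 split: nat.split)
  moreover have "coeff r 0 \<noteq> 0"
    using assms leading_coeff_0_iff[of r] by simp
  ultimately show ?thesis
    by simp
qed

lemma min_poly_emb: "min_poly emb (emb c) = [:- c, 1:]"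
proof (rule min_poly_eqI)
  fix r assume "r \<noteq> 0" "poly (lift r) (emb c) = 0"
  then show "degree [:- c, 1:] \<le> degree r"
    using nonzero_const_not_root[of r "emb c"] by (cases "degree r") auto
qed simp_all

lemma min_poly_degree_2:
  assumes \<beta>: "\<beta> \<notin> range emb"
    and p: "degree p = 2" "lead_coeff p = 1" "poly (lift p) \<beta> = 0"
  shows "min_poly emb \<beta> = p"
proof (rule min_poly_eqI[OF p(2,3)])
  fix r assume r: "r \<noteq> 0" "poly (lift r) \<beta> = 0"
  show "degree p \<le> degree r"
  proof (rule ccontr)
    assume "\<not> ?thesis"
    with r p(1) nonzero_const_not_root have "degree r = 1"
      by fastforce
    then have "lift r = [:emb (coeff r 0), emb (coeff r 1):]"
      by (intro poly_eqI) (auto simp: coeff_pCons coeff_eq_0 split: nat.split)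
    moreover have "coeff r 1 \<noteq> 0"
      using r(1) \<open>degree r = 1\<close> leading_coeff_0_iff[of r] by simp
    ultimately have "\<beta> = emb (- coeff r 0 / coeff r 1)"
      using r(2) by (auto simp: field_simps eq_neg_iff_add_eq_0 add.commute)
    with \<beta> show False
      by blast
  qed
qed

end

section \<open>Frobenius and trace of a quadratic extension\<close>

locale quadratic_extension = subfield_embedding emb
  for emb :: "'a::{field,finite} \<Rightarrow> 'b::{field,finite}" +
  fixes q :: nat
  assumes q_def: "q = CARD('a)"
    and card_extension: "CARD('b) = q ^ 2"
begin

lemma CARD_base: "CARD('a) = q"
  by (simp add: q_def)

lemma q_ge_2: "2 \<le> q"
  unfolding q_def by (rule CARD_field_ge_2)

lemma q_pos: "0 < q"
  using q_ge_2 by simp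

lemma CHAR_extension: "CHAR('b) = CHAR('a)"
proof -
  have "CHAR('b) dvd m \<longleftrightarrow> CHAR('a) dvd m" for m
    using emb_eq_0_iff[of "of_nat m"] by (simp flip: of_nat_eq_0_iff_char_dvd)
  then show ?thesis
    by (meson dvd_antisym dvd_refl)
qed

lemma frobenius_add: "(x + y :: 'b) ^ q = x ^ q + y ^ q"
proof -
  obtain k where "q = CHAR('b) ^ k"
    using CARD_eq_CHAR_power[where 'a='a] unfolding q_def CHAR_extension by blast
  then show ?thesis
    by (rule freshmans_dream'[OF prime_CHAR_finite_field])
qed

lemma frobenius_minus: "(- x :: 'b) ^ q = - (x ^ q)"
  using frobenius_add[of "- x" x] q_ge_2 by (simp add: zero_power eq_neg_iff_add_eq_0)

lemma frobenius_diff: "(x - y :: 'b) ^ q = x ^ q - y ^ q"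
  using frobenius_add[of x "- y"] frobenius_minus[of y] by simp

lemma frobenius_sum: "(sum f A :: 'b) ^ q = (\<Sum>i\<in>A. f i ^ q)"
  using q_ge_2 by (induction A rule: infinite_finite_induct) (auto simp: frobenius_add zero_power)

lemma power_q_squared: "(x :: 'b) ^ (q * q) = x"
  using finite_field_power_CARD[of x] card_extension by (simp add: power2_eq_square)

lemma nonzero_power_q2_minus_1:
  assumes "(x :: 'b) \<noteq> 0"
  shows "x ^ (q ^ 2 - 1) = 1"
proof -
  have "x * x ^ (q ^ 2 - 1) = x * 1"
    using finite_field_power_CARD[of x] q_ge_2 card_extension
    by (simp flip: power_Suc)
  with assms show ?thesis
    by simp
qed

lemma emb_power_q [simp]: "emb x ^ q = emb x"
  using finite_field_power_CARD[of x] unfolding q_def by (metis emb_power)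

definition Fq :: "'b set" where
  "Fq = range emb"

lemma emb_in_Fq [simp]: "emb x \<in> Fq"
  unfolding Fq_def by simp

lemma card_Fq: "card Fq = q"
  unfolding Fq_def q_def by (simp add: card_image inj_emb)

lemma roots_power_q_plus_linear:
  fixes c :: 'b
  shows "finite {x. x ^ q + c * x = 0}" "card {x. x ^ q + c * x = 0} \<le> q"
proof -
  define P :: "'b poly" where "P = monom 1 q + [:0, c:]"
  have "degree P = q"
    unfolding P_def using q_ge_2 by (subst degree_add_eq_left) (auto simp: degree_monom_eq)
  moreover from this have "P \<noteq> 0"
    using q_ge_2 by auto
  moreover have "{x. x ^ q + c * x = 0} = {x. poly P x = 0}"
    unfolding P_def by (simp add: poly_monom mult.commute)
  ultimately show "finite {x. x ^ q + c * x = 0}" "card {x. x ^ q + c * x = 0} \<le> q"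
    using poly_roots_finite[of P] card_poly_roots_bound[of P] by simp_all
qed

text \<open>Fq consists of q roots of x^q - x, hence of all of them.\<close>
lemma in_Fq_iff: "y \<in> Fq \<longleftrightarrow> y ^ q = y"
proof -
  have roots: "x ^ q + (- 1) * x = 0 \<longleftrightarrow> x ^ q = x" for x :: 'b
    by simp
  have "Fq \<subseteq> {x. x ^ q + (- 1) * x = 0}"
    unfolding Fq_def roots by auto
  then have "Fq = {x. x ^ q + (- 1) * x = 0}"
    using roots_power_q_plus_linear[of "- 1"] card_Fq by (intro card_seteq) simp_all
  then show ?thesis
    unfolding roots by blast
qed

lemma Fq_0 [simp]: "0 \<in> Fq" and Fq_1 [simp]: "1 \<in> Fq"
  using emb_in_Fq[of 0] emb_in_Fq[of 1] by simp_all

lemma Fq_add: "x \<in> Fq \<Longrightarrow> y \<in> Fq \<Longrightarrow> x + y \<in> Fq"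
  and Fq_mult: "x \<in> Fq \<Longrightarrow> y \<in> Fq \<Longrightarrow> x * y \<in> Fq"
  and Fq_uminus: "x \<in> Fq \<Longrightarrow> - x \<in> Fq"
  and Fq_divide: "x \<in> Fq \<Longrightarrow> y \<in> Fq \<Longrightarrow> x / y \<in> Fq"
  and Fq_inverse: "x \<in> Fq \<Longrightarrow> inverse x \<in> Fq"
  and Fq_power: "x \<in> Fq \<Longrightarrow> x ^ k \<in> Fq"
  unfolding Fq_def by (auto simp flip: emb_add emb_mult emb_minus emb_divide emb_inverse emb_power)

lemma power_q_notin_Fq: "x \<notin> Fq \<Longrightarrow> x ^ q \<notin> Fq"
  using power_q_squared[of x] by (auto simp: in_Fq_iff simp flip: power_mult)

definition tr :: "'b \<Rightarrow> 'b" where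
  "tr y = y + y ^ q"

lemma tr_in_Fq [simp]: "tr y \<in> Fq"
  unfolding tr_def in_Fq_iff by (simp add: frobenius_add power_q_squared flip: power_mult)

lemma tr_0 [simp]: "tr 0 = 0"
  unfolding tr_def using q_ge_2 by (simp add: zero_power)

lemma tr_add: "tr (x + y) = tr x + tr y"
  and tr_diff: "tr (x - y) = tr x - tr y"
  unfolding tr_def by (simp_all add: frobenius_add frobenius_diff algebra_simps)

lemma tr_mult_Fq: "a \<in> Fq \<Longrightarrow> tr (a * y) = a * tr y"
  unfolding tr_def by (simp add: in_Fq_iff power_mult_distrib algebra_simps)

lemma norm_in_Fq: "y ^ (q + 1) \<in> Fq"
proof -
  have "(y ^ (q + 1)) ^ q = y ^ (q * q) * y ^ q"
    by (simp add: algebra_simps flip: power_mult power_add)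
  then show ?thesis
    by (simp add: in_Fq_iff power_q_squared)
qed

lemma card_tr_fiber_eq_kernel:
  assumes "d \<in> range tr"
  shows "card {z. tr z = d} = card {z. tr z = 0}"
proof -
  obtain z0 where "tr z0 = d"
    using assms by blast
  then have "{z. tr z = d} = (\<lambda>z. z + z0) ` {z. tr z = 0}"
    by (auto simp: tr_add tr_diff intro!: image_eqI[of _ _ "_ - z0"])
  then show ?thesis
    by (simp add: card_image)
qed

text \<open>The kernel consists of roots of x^q + x and the image lies in Fq, so both have at most
  q elements; as the fibres partition a set of q^2 elements, both have exactly q elements.\<close>
lemma card_tr_fiber:
  assumes "c \<in> Fq"
  shows "card {z. tr z = c} = q"
proof -
  define K where "K = {z. tr z = 0}"
  have card_K: "card K \<le> q"
    unfolding K_def tr_def using roots_power_q_plus_linear(2)[of 1] by (simp add: add.commute)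
  have "(\<Union>d\<in>range tr. {z. tr z = d}) = UNIV"
    by auto
  then have "q * q = card (\<Union>d\<in>range tr. {z. tr z = d})"
    using card_extension by (simp add: power2_eq_square)
  also have "\<dots> = (\<Sum>d\<in>range tr. card {z. tr z = d})"
    by (rule card_UN_disjoint) auto
  also have "\<dots> = card (range tr) * card K"
    unfolding K_def by (simp add: card_tr_fiber_eq_kernel)
  finally have product: "q * q = card (range tr) * card K" .
  have "range tr \<subseteq> Fq"
    by auto
  then have "card (range tr) \<le> q"
    unfolding card_Fq[symmetric] by (intro card_mono) simp_all
  have "card (range tr) = q"
  proof (rule ccontr)
    assume "card (range tr) \<noteq> q"
    with \<open>card (range tr) \<le> q\<close> q_ge_2 have "card (range tr) * q < q * q"
      by simp
    moreover have "card (range tr) * card K \<le> card (range tr) * q"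
      using card_K by simp
    ultimately show False
      using product by simp
  qed
  moreover from this have "card K = q"
    using product q_ge_2 by simp
  moreover have "range tr = Fq"
    by (intro card_seteq \<open>range tr \<subseteq> Fq\<close>) (simp_all add: card_Fq \<open>card (range tr) = q\<close>)
  ultimately show ?thesis
    using card_tr_fiber_eq_kernel[of c] assms unfolding K_def by simp
qed

lemma tr_surj:
  assumes "c \<in> Fq"
  obtains z where "tr z = c"
proof -
  have "{z. tr z = c} \<noteq> {}"
    using card_tr_fiber[OF assms] q_pos by (intro notI) simp
  with that show ?thesis
    by blast
qed

lemma poly_lift_power_q: "poly (lift p) (x ^ q) = poly (lift p) x ^ q"
  by (simp add: poly_altdef frobenius_sum power_mult_distrib flip: power_mult)
     (simp add: mult.commute)

definition conj_poly :: "'b \<Rightarrow> 'a poly" where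
  "conj_poly b = [: emb_inv (b ^ (q + 1)), - emb_inv (tr b), 1 :]"

lemma degree_conj_poly: "degree (conj_poly b) = 2"
  and lead_coeff_conj_poly: "lead_coeff (conj_poly b) = 1"
  by (simp_all add: conj_poly_def numeral_2_eq_2)

lemma conj_poly_nonzero: "conj_poly b \<noteq> 0"
  using degree_conj_poly[of b] by auto

lemma poly_lift_conj_poly: "poly (lift (conj_poly b)) x = (x - b) * (x - b ^ q)"
  unfolding conj_poly_def using norm_in_Fq[of b] tr_in_Fq[of b]
  by (simp add: Fq_def tr_def algebra_simps power2_eq_square)

lemma min_poly_notin_Fq: "b \<notin> Fq \<Longrightarrow> min_poly emb b = conj_poly b"
  by (rule min_poly_degree_2[OF _ degree_conj_poly lead_coeff_conj_poly])
     (simp_all add: Fq_def poly_lift_conj_poly)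

lemma min_poly_in_Fq: "b \<in> Fq \<Longrightarrow> min_poly emb b = [:- emb_inv b, 1:]"
  unfolding Fq_def using min_poly_emb by auto

end

section \<open>The cyclic codes\<close>

locale code_setting = quadratic_extension emb q
  for emb :: "'a::{field,finite} \<Rightarrow> 'b::{field,finite}" and q :: nat +
  fixes \<gamma> :: 'b and e1 e2 :: int and n :: nat
  assumes primitive: "primitive_element \<gamma>"
    and n_def: "n = q ^ 2 - 1"
    and gcd_e1_e2: "gcd (int q - 1) (2 * e1 - e2) = 1"
    and gcd_e2: "gcd (int q + 1) e2 = 1"
begin

lemma q_less_n: "q < n"
proof -
  have "q * 2 \<le> q * q"
    using q_ge_2 by (intro mult_le_mono2) simp
  then show ?thesis
    using q_ge_2 unfolding n_def power2_eq_square by linarith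
qed

lemma n_pos: "0 < n"
  using q_less_n by simp

lemma int_n: "int n = (int q + 1) * (int q - 1)"
  using q_ge_2 unfolding n_def by (simp add: of_nat_diff power2_eq_square algebra_simps)

lemma card_nonzero: "card {y :: 'b. y \<noteq> 0} = n"
proof -
  have "{y :: 'b. y \<noteq> 0} = UNIV - {0}"
    by auto
  then show ?thesis
    using card_extension by (simp add: card_Diff_singleton n_def)
qed

lemma power_n: "(x :: 'b) \<noteq> 0 \<Longrightarrow> x ^ n = 1"
  unfolding n_def by (rule nonzero_power_q2_minus_1)

lemma gamma_nonzero [simp]: "\<gamma> \<noteq> 0"
  using primitive unfolding primitive_element_def by simp

lemma gamma_power_eq_1_iff: "\<gamma> ^ k = 1 \<longleftrightarrow> n dvd k"
proof
  assume "\<gamma> ^ k = 1"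
  moreover have "\<gamma> ^ k = (\<gamma> ^ n) ^ (k div n) * \<gamma> ^ (k mod n)"
    by (simp flip: power_mult power_add)
  ultimately have "\<gamma> ^ (k mod n) = 1"
    by (simp add: power_n)
  moreover have "k mod n < CARD('b) - 1"
    using n_pos card_extension by (simp add: n_def)
  ultimately show "n dvd k"
    using primitive unfolding primitive_element_def by (auto simp: dvd_eq_mod_eq_0)
qed (auto simp: power_mult power_n)

lemma gamma_powi_eq_1_iff: "\<gamma> powi m = 1 \<longleftrightarrow> int n dvd m"
proof -
  have "\<gamma> powi m = \<gamma> powi (int n * (m div int n)) * \<gamma> powi (m mod int n)"
    by (simp flip: power_int_add)
  also have "\<gamma> powi (int n * (m div int n)) = 1"
    by (simp add: power_int_mult power_n)
  also have "m mod int n = int (nat (m mod int n))"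
    using n_pos by simp
  also have "\<gamma> powi int (nat (m mod int n)) = \<gamma> ^ nat (m mod int n)"
    by (rule power_int_of_nat)
  finally have "\<gamma> powi m = 1 \<longleftrightarrow> n dvd nat (m mod int n)"
    by (simp add: gamma_power_eq_1_iff)
  also have "\<dots> \<longleftrightarrow> nat (m mod int n) = 0"
  proof
    assume "n dvd nat (m mod int n)"
    moreover have "nat (m mod int n) < n"
      using n_pos by (simp add: nat_less_iff)
    ultimately show "nat (m mod int n) = 0"
      by (meson dvd_imp_le not_less neq0_conv)
  qed simp
  also have "\<dots> \<longleftrightarrow> int n dvd m"
  proof -
    have "0 \<le> m mod int n"
      using n_pos by simp
    then show ?thesis
      by (auto simp: dvd_eq_mod_eq_0)
  qed
  finally show ?thesis .
qed

definition \<zeta> :: 'b where "\<zeta> = \<gamma> powi ((int q + 1) * e1)"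
definition \<delta> :: 'b where "\<delta> = \<gamma> powi e2"
definition \<rho> :: 'b where "\<rho> = \<gamma> powi (e2 - (int q + 1) * e1)"

lemma zeta_nonzero [simp]: "\<zeta> \<noteq> 0"
  and delta_nonzero [simp]: "\<delta> \<noteq> 0"
  and rho_nonzero [simp]: "\<rho> \<noteq> 0"
  unfolding \<zeta>_def \<delta>_def \<rho>_def by simp_all

lemma delta_eq: "\<delta> = \<zeta> * \<rho>"
  unfolding \<zeta>_def \<delta>_def \<rho>_def by (simp flip: power_int_add)

text \<open>The two gcd hypotheses say exactly that the exponent of \<rho> is coprime to both factors
  q + 1 and q - 1 of n, so \<rho> is again a primitive element.\<close>
lemma coprime_rho_exponent: "coprime (e2 - (int q + 1) * e1) (int n)"
proof -
  have "gcd (int q + 1) (e2 - (int q + 1) * e1) = 1"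
    using gcd_e2 by (metis gcd_add_mult diff_conv_add_uminus mult_minus_left mult.commute add.commute)
  moreover have "gcd (int q - 1) (e2 - (int q + 1) * e1) = 1"
  proof -
    have "e2 - (int q + 1) * e1 = (- e1) * (int q - 1) + (- (2 * e1 - e2))"
      by (simp add: algebra_simps)
    then show ?thesis
      using gcd_e1_e2 by (simp only: gcd_add_mult gcd_neg2)
  qed
  ultimately show ?thesis
    unfolding int_n coprime_mult_right_iff by (simp add: coprime_iff_gcd_eq_1 gcd.commute)
qed

lemma rho_power_eq_1_iff: "\<rho> ^ k = 1 \<longleftrightarrow> n dvd k"
proof -
  have "\<rho> ^ k = \<gamma> powi ((e2 - (int q + 1) * e1) * int k)"
    unfolding \<rho>_def by (simp add: power_int_mult)
  also have "\<dots> = 1 \<longleftrightarrow> int n dvd (e2 - (int q + 1) * e1) * int k"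
    by (rule gamma_powi_eq_1_iff)
  also have "\<dots> \<longleftrightarrow> int n dvd int k"
    using coprime_rho_exponent by (simp add: coprime_dvd_mult_right_iff coprime_commute)
  finally show ?thesis
    by simp
qed

lemma bij_rho_powers: "bij_betw (\<lambda>i. \<rho> ^ i) {..<n} {y. y \<noteq> 0}"
proof -
  have inj: "inj_on (\<lambda>i. \<rho> ^ i) {..<n}"
  proof (rule linorder_inj_onI)
    fix i j assume ij: "i < j" "j \<in> {..<n}"
    then have "\<not> n dvd j - i"
      by (auto dest: dvd_imp_le)
    then have "\<rho> ^ (j - i) \<noteq> 1"
      by (simp add: rho_power_eq_1_iff)
    moreover have "\<rho> ^ j = \<rho> ^ i * \<rho> ^ (j - i)"
      using ij by (simp flip: power_add)
    ultimately show "\<rho> ^ i \<noteq> \<rho> ^ j"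
      by simp
  qed auto
  moreover have "(\<lambda>i. \<rho> ^ i) ` {..<n} = {y. y \<noteq> 0}"
    using inj card_nonzero by (intro card_subset_eq) (auto simp: card_image)
  ultimately show ?thesis
    by (simp add: bij_betw_def)
qed

lemma rho_power_inj: "i < n \<Longrightarrow> j < n \<Longrightarrow> \<rho> ^ i = \<rho> ^ j \<longleftrightarrow> i = j"
  using bij_rho_powers by (auto simp: bij_betw_def inj_on_def)

lemma nonzero_eq_rho_power:
  assumes "y \<noteq> 0"
  obtains i where "i < n" "y = \<rho> ^ i"
  using assms bij_rho_powers by (auto simp: bij_betw_def)

lemma zeta_in_Fq: "\<zeta> \<in> Fq"
proof -
  have "\<zeta> ^ (q - 1) = \<gamma> powi ((int q + 1) * e1 * int (q - 1))"
    unfolding \<zeta>_def by (simp add: power_int_mult)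
  also have "(int q + 1) * e1 * int (q - 1) = int n * e1"
    using q_ge_2 by (simp add: int_n of_nat_diff algebra_simps)
  finally have "\<zeta> ^ Suc (q - 1) = \<zeta>"
    by (simp add: gamma_powi_eq_1_iff)
  then show ?thesis
    using q_ge_2 by (simp add: in_Fq_iff)
qed

lemma delta_notin_Fq: "\<delta> \<notin> Fq"
proof
  assume "\<delta> \<in> Fq"
  then have "\<delta> ^ Suc (q - 1) = \<delta>"
    using q_ge_2 by (simp add: in_Fq_iff)
  then have "\<gamma> powi (e2 * int (q - 1)) = 1"
    unfolding \<delta>_def by (simp add: power_int_mult)
  then have "(int q + 1) * (int q - 1) dvd e2 * (int q - 1)"
    using q_ge_2 by (simp add: gamma_powi_eq_1_iff int_n of_nat_diff)
  then have "int q + 1 dvd e2"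
    using q_ge_2 by simp
  then have "int q + 1 dvd 1"
    using gcd_e2 by (metis gcd_greatest dvd_refl)
  then show False
    using q_ge_2 by simp
qed

lemma inverse_zeta_in_Fq: "inverse \<zeta> \<in> Fq"
  using zeta_in_Fq by (rule Fq_inverse)

lemma inverse_delta_notin_Fq: "inverse \<delta> \<notin> Fq"
  using Fq_inverse[of "inverse \<delta>"] delta_notin_Fq by auto

abbreviation Xn :: "'a poly" where
  "Xn \<equiv> monom 1 n - 1"

lemma Xn_dvd_if_roots:
  assumes "\<And>x. x \<noteq> 0 \<Longrightarrow> poly (lift p) x = 0"
  shows "Xn dvd p"
proof (rule dvd_if_lifted_roots[of _ "{x. x \<noteq> 0}"])
  show "Xn \<noteq> 0" "degree Xn \<le> card {x :: 'b. x \<noteq> 0}"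
    using degree_monom_1_minus_1[OF n_pos, where 'a='a] n_pos card_nonzero by auto
qed (simp_all add: assms poly_monom power_n)

lemma dvd_Xn_if_roots:
  assumes "h \<noteq> 0" "degree h \<le> card R" "0 \<notin> R" "\<And>x. x \<in> R \<Longrightarrow> poly (lift h) x = 0"
  shows "h dvd Xn"
  using assms by (intro dvd_if_lifted_roots[of h R]) (auto simp: poly_monom intro!: power_n)

lemma mem_cyclic_code_pcI:
  assumes H: "H dvd Xn" and c: "degree c < n"
    and roots: "\<And>x. x \<noteq> 0 \<Longrightarrow> poly (lift H) x \<noteq> 0 \<Longrightarrow> poly (lift c) x = 0"
  shows "c \<in> cyclic_code_pc n H"
proof -
  obtain g where g: "Xn = H * g"
    using H by (elim dvdE)
  have "H \<noteq> 0"
    using g degree_monom_1_minus_1[OF n_pos, where 'a='a] n_pos by auto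
  have "Xn dvd c * H"
    by (rule Xn_dvd_if_roots) (use roots in auto)
  then obtain k where "c * H = H * g * k"
    unfolding g by (elim dvdE)
  then have "c = g * k"
    using \<open>H \<noteq> 0\<close> by (simp add: algebra_simps)
  moreover have "Xn div H = g"
    using g \<open>H \<noteq> 0\<close> by simp
  ultimately show ?thesis
    unfolding cyclic_code_pc_def using c by simp
qed

lemma cyclic_code_pc_eq_image:
  assumes H: "H dvd Xn" and sub: "f ` A \<subseteq> cyclic_code_pc n H"
    and inj: "inj_on f A" and card: "card A = q ^ degree H"
  shows "cyclic_code_pc n H = f ` A"
proof -
  have card_code: "card (cyclic_code_pc n H) = q ^ degree H"
    using card_cyclic_code_pc[OF n_pos H] by (simp add: CARD_base)
  then have "finite (cyclic_code_pc n H)"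
    using q_ge_2 by (intro card_ge_0_finite) simp
  with sub inj card card_code show ?thesis
    by (intro card_subset_eq[symmetric]) (simp_all add: card_image)
qed

definition cw_entry :: "'a \<Rightarrow> 'b \<Rightarrow> nat \<Rightarrow> 'b" where
  "cw_entry u v i = emb u * \<zeta> ^ i + tr (v * \<delta> ^ i)"

text \<open>Every cw_entry lies in Fq (cw_entry_in_Fq), so emb_inv recovers the coefficient.\<close>
definition codeword :: "'a \<Rightarrow> 'b \<Rightarrow> 'a poly" where
  "codeword u v = (\<Sum>i<n. monom (emb_inv (cw_entry u v i)) i)"

lemma cw_entry_in_Fq: "cw_entry u v i \<in> Fq"
  unfolding cw_entry_def by (intro Fq_add Fq_mult Fq_power zeta_in_Fq) simp_all

lemma emb_coeff_codeword: "emb (coeff (codeword u v) i) = (if i < n then cw_entry u v i else 0)"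
  unfolding codeword_def coeff_sum using cw_entry_in_Fq[of u v i] by (simp add: coeff_monom Fq_def)

lemma degree_codeword: "degree (codeword u v) < n"
proof -
  have "degree (codeword u v) \<le> n - 1"
    by (rule degree_le) (auto simp: emb_coeff_codeword simp flip: emb_eq_0_iff)
  then show ?thesis
    using n_pos by simp
qed

lemma cw_entry_diff: "cw_entry (u - u') (v - v') i = cw_entry u v i - cw_entry u' v' i"
  unfolding cw_entry_def left_diff_distrib tr_diff by (simp add: algebra_simps)

lemma cw_entry_eq_rho: "cw_entry u v i = \<zeta> ^ i * (emb u + tr (v * \<rho> ^ i))"
proof -
  have "tr (v * \<delta> ^ i) = tr (\<zeta> ^ i * (v * \<rho> ^ i))"
    by (simp add: delta_eq power_mult_distrib algebra_simps)
  also have "\<dots> = \<zeta> ^ i * tr (v * \<rho> ^ i)"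
    by (intro tr_mult_Fq Fq_power zeta_in_Fq)
  finally show ?thesis
    unfolding cw_entry_def by (simp add: algebra_simps)
qed

text \<open>Since \<rho> is primitive, i \<mapsto> \<rho>^i turns the zero positions of a codeword into the nonzero
  solutions of tr(v y) = -u.\<close>
lemma card_cw_entry_zeros:
  "card {i. i < n \<and> cw_entry u v i = 0} = card {y. y \<noteq> 0 \<and> tr (v * y) = - emb u}"
proof -
  have zero_iff: "cw_entry u v i = 0 \<longleftrightarrow> tr (v * \<rho> ^ i) = - emb u" for i
    by (simp add: cw_entry_eq_rho eq_neg_iff_add_eq_0 add.commute)
  have image: "(\<lambda>i. \<rho> ^ i) ` {i. i < n \<and> cw_entry u v i = 0} =
      {y. y \<noteq> 0 \<and> tr (v * y) = - emb u}"
    by (auto simp: zero_iff elim!: nonzero_eq_rho_power)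
  have "inj_on (\<lambda>i. \<rho> ^ i) {i. i < n \<and> cw_entry u v i = 0}"
    by (rule inj_on_subset[OF conjunct1[OF bij_rho_powers[unfolded bij_betw_def]]]) auto
  from card_image[OF this] show ?thesis
    unfolding image by simp
qed

lemma card_nonzero_tr_scaled:
  assumes "c \<in> Fq"
  shows "card {y. y \<noteq> 0 \<and> tr (v * y) = c} =
    (if v = 0 then (if c = 0 then n else 0) else (if c = 0 then q - 1 else q))"
proof (cases "v = 0")
  case True
  then show ?thesis
    using card_nonzero by simp
next
  case False
  have "{y. y \<noteq> 0 \<and> tr (v * y) = c} = (\<lambda>z. z / v) ` ({z. tr z = c} - {0})"
    using False by (auto intro!: image_eqI[of _ _ "v * _"])
  moreover have "inj_on (\<lambda>z. z / v) ({z. tr z = c} - {0})"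
    using False by (auto simp: inj_on_def)
  moreover have "card ({z. tr z = c} - {0}) = (if c = 0 then q - 1 else q)"
    using card_tr_fiber[OF assms] by (cases "c = 0") (simp_all add: card_Diff_singleton_if)
  ultimately show ?thesis
    using False by (simp add: card_image)
qed

lemma hamming_wt_codeword: "hamming_wt n (codeword u v) =
   (if v = 0 then (if u = 0 then 0 else n) else (if u = 0 then n + 1 - q else n - q))"
proof -
  have "hamming_wt n (codeword u v) = card {i. i < n \<and> cw_entry u v i \<noteq> 0}"
    unfolding hamming_wt_def by (metis (lifting) emb_coeff_codeword emb_eq_0_iff)
  also have "\<dots> = n - card {i. i < n \<and> cw_entry u v i = 0}"
  proof -
    have "{i. i < n \<and> cw_entry u v i \<noteq> 0} = {..<n} - {i. i < n \<and> cw_entry u v i = 0}"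
      by auto
    moreover have "{i. i < n \<and> cw_entry u v i = 0} \<subseteq> {..<n}"
      by auto
    ultimately show ?thesis
      by (simp add: card_Diff_subset finite_subset)
  qed
  also have "\<dots> = n - card {y. y \<noteq> 0 \<and> tr (v * y) = - emb u}"
    by (simp add: card_cw_entry_zeros)
  also have "\<dots> = n - (if v = 0 then (if u = 0 then n else 0) else (if u = 0 then q - 1 else q))"
    by (simp add: card_nonzero_tr_scaled Fq_uminus)
  finally show ?thesis
    using q_ge_2 q_less_n by auto
qed

lemma codeword_eq_iff: "codeword u v = codeword u' v' \<longleftrightarrow> u = u' \<and> v = v'"
proof
  assume eq: "codeword u v = codeword u' v'"
  have "emb (coeff (codeword (u - u') (v - v')) i) = 0" for i
    using arg_cong[OF eq, of "\<lambda>c. emb (coeff c i)"]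
    by (cases "i < n") (simp_all add: emb_coeff_codeword cw_entry_diff)
  then have "hamming_wt n (codeword (u - u') (v - v')) = 0"
    by (simp add: hamming_wt_def)
  then show "u = u' \<and> v = v'"
    using q_less_n by (simp add: hamming_wt_codeword split: if_splits)
qed simp

lemma codeword_eq_0_iff: "codeword u v = 0 \<longleftrightarrow> u = 0 \<and> v = 0"
proof -
  have "codeword 0 0 = 0"
    by (rule poly_eqI) (simp add: emb_coeff_codeword cw_entry_def flip: emb_eq_0_iff)
  then show ?thesis
    using codeword_eq_iff[of u v 0 0] by simp
qed

lemma poly_lift_codeword: "poly (lift (codeword u v)) x =
    emb u * (\<Sum>i<n. (\<zeta> * x) ^ i) + v * (\<Sum>i<n. (\<delta> * x) ^ i) + v ^ q * (\<Sum>i<n. (\<delta> ^ q * x) ^ i)"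
proof -
  have "poly (lift (codeword u v)) x = (\<Sum>i<n. cw_entry u v i * x ^ i)"
    by (simp add: poly_lift_eq_sum[OF degree_codeword] emb_coeff_codeword)
  also have "\<dots> = (\<Sum>i<n. emb u * (\<zeta> * x) ^ i + v * (\<delta> * x) ^ i + v ^ q * (\<delta> ^ q * x) ^ i)"
    unfolding cw_entry_def tr_def
    by (intro sum.cong) (simp_all add: frobenius_add power_mult_distrib algebra_simps flip: power_mult)
  finally show ?thesis
    by (simp add: sum.distrib sum_distrib_left)
qed

text \<open>Off the inverses of \<zeta>, \<delta>, \<delta>^q the three geometric sums of poly_lift_codeword vanish.\<close>
lemma poly_lift_codeword_eq_0:
  assumes x: "x \<noteq> 0"
    and u: "u \<noteq> 0 \<Longrightarrow> x \<noteq> inverse \<zeta>"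
    and v: "v \<noteq> 0 \<Longrightarrow> x \<noteq> inverse \<delta> \<and> x \<noteq> inverse \<delta> ^ q"
  shows "poly (lift (codeword u v)) x = 0"
proof -
  have vanish: "(\<Sum>i<n. (y * x) ^ i) = 0" if "y \<noteq> 0" "x \<noteq> inverse y" for y
  proof -
    have "(y * x) ^ n = 1" "y * x \<noteq> 1"
      using that x by (auto simp: power_n field_simps)
    then show ?thesis
      by (simp add: sum_gp_strict)
  qed
  have "emb u * (\<Sum>i<n. (\<zeta> * x) ^ i) = 0"
    using u vanish[of \<zeta>] by (cases "u = 0") auto
  moreover have "v * (\<Sum>i<n. (\<delta> * x) ^ i) = 0"
    using v vanish[of \<delta>] by (cases "v = 0") auto
  moreover have "v ^ q * (\<Sum>i<n. (\<delta> ^ q * x) ^ i) = 0"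
    using v vanish[of "\<delta> ^ q"] q_ge_2 by (cases "v = 0") (auto simp: power_inverse zero_power)
  ultimately show ?thesis
    unfolding poly_lift_codeword by (simp only: add_0_right)
qed

definition h1 :: "'a poly" where
  "h1 = [:- emb_inv (inverse \<zeta>), 1:]"

definition h2 :: "'a poly" where
  "h2 = conj_poly (inverse \<delta>)"

abbreviation C :: "'a poly set" where
  "C \<equiv> cyclic_code_pc n (h1 * h2)"

lemma min_poly_eq_h1: "min_poly emb (\<gamma> powi (- ((int q + 1) * e1))) = h1"
  unfolding h1_def power_int_minus \<zeta>_def[symmetric] by (rule min_poly_in_Fq[OF inverse_zeta_in_Fq])

lemma min_poly_eq_h2: "min_poly emb (\<gamma> powi (- e2)) = h2"
  unfolding h2_def power_int_minus \<delta>_def[symmetric] by (rule min_poly_notin_Fq[OF inverse_delta_notin_Fq])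

lemma degree_h1: "degree h1 = 1"
  and degree_h2: "degree h2 = 2"
  by (simp_all add: h1_def h2_def degree_conj_poly)

lemma h1_nonzero: "h1 \<noteq> 0"
  and h2_nonzero: "h2 \<noteq> 0"
  by (simp_all add: h1_def h2_def conj_poly_nonzero)

lemma poly_lift_h1: "poly (lift h1) x = x - inverse \<zeta>"
  using inverse_zeta_in_Fq by (simp add: h1_def Fq_def)

lemma poly_lift_h2: "poly (lift h2) x = (x - inverse \<delta>) * (x - inverse \<delta> ^ q)"
  by (simp add: h2_def poly_lift_conj_poly)

lemma roots_distinct:
  "inverse \<delta> ^ q \<noteq> inverse \<delta>" "inverse \<zeta> \<noteq> inverse \<delta>" "inverse \<zeta> \<noteq> inverse \<delta> ^ q"
  using inverse_zeta_in_Fq inverse_delta_notin_Fq power_q_notin_Fq[OF inverse_delta_notin_Fq]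
  by (auto simp: in_Fq_iff)

lemma h1_dvd_Xn: "h1 dvd Xn"
  by (rule dvd_Xn_if_roots[OF h1_nonzero, of "{inverse \<zeta>}"]) (simp_all add: degree_h1 poly_lift_h1)

lemma h2_dvd_Xn: "h2 dvd Xn"
  by (rule dvd_Xn_if_roots[OF h2_nonzero, of "{inverse \<delta>, inverse \<delta> ^ q}"])
     (use roots_distinct in \<open>auto simp: degree_h2 poly_lift_h2\<close>)

lemma h1_h2_dvd_Xn: "h1 * h2 dvd Xn"
  by (rule dvd_Xn_if_roots[of _ "{inverse \<zeta>, inverse \<delta>, inverse \<delta> ^ q}"])
     (use roots_distinct h1_nonzero h2_nonzero in
       \<open>auto simp: degree_h1 degree_h2 degree_mult_eq poly_lift_h1 poly_lift_h2\<close>)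

lemma code_h1_h2_eq: "C = (\<lambda>(u, v). codeword u v) ` UNIV"
proof (rule cyclic_code_pc_eq_image[OF h1_h2_dvd_Xn])
  show "(\<lambda>(u, v). codeword u v) ` UNIV \<subseteq> C"
    by (auto intro!: mem_cyclic_code_pcI[OF h1_h2_dvd_Xn degree_codeword] poly_lift_codeword_eq_0
        simp: poly_lift_h1 poly_lift_h2)
  show "card (UNIV :: ('a \<times> 'b) set) = q ^ degree (h1 * h2)"
    using h1_nonzero h2_nonzero
    by (simp add: degree_mult_eq degree_h1 degree_h2 card_extension CARD_base power2_eq_square flip: power_add)
qed (auto simp: inj_on_def codeword_eq_iff)

lemma code_h1_eq: "cyclic_code_pc n h1 = (\<lambda>u. codeword u 0) ` UNIV"
proof (rule cyclic_code_pc_eq_image[OF h1_dvd_Xn])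
  show "(\<lambda>u. codeword u 0) ` UNIV \<subseteq> cyclic_code_pc n h1"
    by (auto intro!: mem_cyclic_code_pcI[OF h1_dvd_Xn degree_codeword] poly_lift_codeword_eq_0
        simp: poly_lift_h1)
qed (auto simp: inj_on_def codeword_eq_iff degree_h1 CARD_base)

lemma code_h2_eq: "cyclic_code_pc n h2 = codeword 0 ` UNIV"
proof (rule cyclic_code_pc_eq_image[OF h2_dvd_Xn])
  show "codeword 0 ` UNIV \<subseteq> cyclic_code_pc n h2"
    by (auto intro!: mem_cyclic_code_pcI[OF h2_dvd_Xn degree_codeword] poly_lift_codeword_eq_0
        simp: poly_lift_h2)
qed (auto simp: inj_on_def codeword_eq_iff degree_h2 card_extension)

lemma nonzero_weights_code_h1: "nonzero_weights n (cyclic_code_pc n h1) = {n}"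
  unfolding nonzero_weights_def code_h1_eq
  by (auto simp: codeword_eq_0_iff hamming_wt_codeword intro!: exI[of _ "codeword 1 0"])

lemma nonzero_weights_code_h2: "nonzero_weights n (cyclic_code_pc n h2) = {n + 1 - q}"
  unfolding nonzero_weights_def code_h2_eq
  by (auto simp: codeword_eq_0_iff hamming_wt_codeword intro!: exI[of _ "codeword 0 1"])

lemma nonzero_weights_code_h1_h2:
  "nonzero_weights n C = {n - q, n + 1 - q, n}"
proof -
  have "nonzero_weights n C =
      {hamming_wt n (codeword u v) | u v. u \<noteq> 0 \<or> v \<noteq> 0}"
    unfolding nonzero_weights_def code_h1_h2_eq by (fastforce simp: codeword_eq_0_iff)
  also have "\<dots> = {n - q, n + 1 - q, n}"
  proof
    show "{hamming_wt n (codeword u v) | u v. u \<noteq> 0 \<or> v \<noteq> 0} \<subseteq> {n - q, n + 1 - q, n}"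
      by (auto simp: hamming_wt_codeword)
    have "n - q = hamming_wt n (codeword 1 1)" "n + 1 - q = hamming_wt n (codeword 0 1)"
      "n = hamming_wt n (codeword 1 0)"
      by (simp_all add: hamming_wt_codeword)
    then show "{n - q, n + 1 - q, n} \<subseteq> {hamming_wt n (codeword u v) | u v. u \<noteq> 0 \<or> v \<noteq> 0}"
      by force
  qed
  finally show ?thesis .
qed

lemma weight_freq_code_h1_h2:
  "weight_freq n C w = card {(u, v). hamming_wt n (codeword u v) = w}"
proof -
  have "{c \<in> C. hamming_wt n c = w} =
      (\<lambda>(u, v). codeword u v) ` {(u, v). hamming_wt n (codeword u v) = w}"
    unfolding code_h1_h2_eq by auto
  moreover have "inj_on (\<lambda>(u, v). codeword u v) A" for A
    by (auto simp: inj_on_def codeword_eq_iff)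
  ultimately show ?thesis
    unfolding weight_freq_def by (simp add: card_image)
qed

lemma weight_distribution_code_h1_h2:
  "weight_freq n C 0 = 1"
  "weight_freq n C (n - q) = (q - 1) * n"
  "weight_freq n C (n + 1 - q) = n"
  "weight_freq n C n = q - 1"
proof -
  have card_units: "card (UNIV - {0 :: 'a}) = q - 1" "card (UNIV - {0 :: 'b}) = n"
    using card_extension by (simp_all add: card_Diff_singleton CARD_base n_def)
  have "{(u, v). hamming_wt n (codeword u v) = 0} = {(0, 0)}"
    and "{(u, v). hamming_wt n (codeword u v) = n - q} = (UNIV - {0}) \<times> (UNIV - {0})"
    and "{(u, v). hamming_wt n (codeword u v) = n + 1 - q} = {0} \<times> (UNIV - {0})"
    and "{(u, v). hamming_wt n (codeword u v) = n} = (UNIV - {0}) \<times> {0}"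
    using q_less_n q_ge_2 by (auto simp: hamming_wt_codeword split: if_splits)
  then show "weight_freq n C 0 = 1"
    "weight_freq n C (n - q) = (q - 1) * n"
    "weight_freq n C (n + 1 - q) = n"
    "weight_freq n C n = q - 1"
    by (simp_all add: weight_freq_code_h1_h2 card_cartesian_product card_units)
qed

lemma code_params_code_h1_h2: "code_params n 3 (n - q) C"
proof -
  have "card C = CARD('a) ^ 3"
    using card_cyclic_code_pc[OF n_pos h1_h2_dvd_Xn] h1_nonzero h2_nonzero
    by (simp add: degree_mult_eq degree_h1 degree_h2 numeral_3_eq_3)
  moreover have "min_dist n C = n - q"
    unfolding min_dist_def nonzero_weights_code_h1_h2 using q_less_n q_ge_2 by simp
  ultimately show ?thesis
    unfolding code_params_def using is_linear_code_cyclic_code_pc[OF n_pos] by simp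
qed

lemma code_h1_ne_code_h2: "cyclic_code_pc n h1 \<noteq> cyclic_code_pc n h2"
proof
  assume "cyclic_code_pc n h1 = cyclic_code_pc n h2"
  then have "q ^ 1 = q ^ 2"
    using card_cyclic_code_pc[OF n_pos h1_dvd_Xn] card_cyclic_code_pc[OF n_pos h2_dvd_Xn]
    by (simp add: degree_h1 degree_h2 CARD_base)
  then show False
    using q_ge_2 by (simp add: power2_eq_square)
qed

section \<open>The dual code\<close>

abbreviation D :: "'a poly set" where
  "D \<equiv> dual_code n C"

lemma inner_codeword:
  assumes "degree d < n"
  shows "emb (\<Sum>i<n. coeff (codeword u v) i * coeff d i) =
    emb u * poly (lift d) \<zeta> + v * poly (lift d) \<delta> + v ^ q * poly (lift d) (\<delta> ^ q)"
proof -
  have "emb (\<Sum>i<n. coeff (codeword u v) i * coeff d i) = (\<Sum>i<n. cw_entry u v i * emb (coeff d i))"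
    by (simp add: emb_coeff_codeword)
  also have "\<dots> = (\<Sum>i<n. emb u * (emb (coeff d i) * \<zeta> ^ i) + v * (emb (coeff d i) * \<delta> ^ i)
      + v ^ q * (emb (coeff d i) * (\<delta> ^ q) ^ i))"
    unfolding cw_entry_def tr_def
    by (intro sum.cong) (simp_all add: frobenius_add power_mult_distrib algebra_simps flip: power_mult)
  also have "\<dots> = emb u * poly (lift d) \<zeta> + v * poly (lift d) \<delta> + v ^ q * poly (lift d) (\<delta> ^ q)"
    by (simp add: poly_lift_eq_sum[OF assms] sum.distrib sum_distrib_left)
  finally show ?thesis .
qed

lemma mem_dual_iff: "d \<in> D \<longleftrightarrow> degree d < n \<and> poly (lift d) \<zeta> = 0 \<and> poly (lift d) \<delta> = 0"
proof
  assume "d \<in> D"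
  then have d: "degree d < n"
    and orth: "\<And>u v. emb u * poly (lift d) \<zeta> + v * poly (lift d) \<delta> + v ^ q * poly (lift d) (\<delta> ^ q) = 0"
    unfolding dual_code_def code_h1_h2_eq by (auto simp flip: inner_codeword)
  have "poly (lift d) \<zeta> = 0"
    using orth[of 1 0] q_ge_2 by (simp add: zero_power)
  moreover have "poly (lift d) \<delta> = 0"
  proof (rule ccontr)
    assume nonzero: "poly (lift d) \<delta> \<noteq> 0"
    obtain t where "tr t = 1"
      using tr_surj[OF Fq_1] .
    define v where "v = t / poly (lift d) \<delta>"
    have "v * poly (lift d) \<delta> = t"
      using nonzero by (simp add: v_def)
    moreover have "v * poly (lift d) \<delta> + (v * poly (lift d) \<delta>) ^ q = 0"
      using orth[of 0 v] by (simp add: poly_lift_power_q power_mult_distrib)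
    ultimately have "tr t = 0"
      by (simp add: tr_def)
    with \<open>tr t = 1\<close> show False
      by simp
  qed
  ultimately show "degree d < n \<and> poly (lift d) \<zeta> = 0 \<and> poly (lift d) \<delta> = 0"
    using d by simp
next
  assume d: "degree d < n \<and> poly (lift d) \<zeta> = 0 \<and> poly (lift d) \<delta> = 0"
  have "(\<Sum>i<n. coeff (codeword u v) i * coeff d i) = 0" for u v
  proof -
    have "emb (\<Sum>i<n. coeff (codeword u v) i * coeff d i) =
        emb u * poly (lift d) \<zeta> + v * poly (lift d) \<delta> + v ^ q * poly (lift d) (\<delta> ^ q)"
      using d by (intro inner_codeword) simp
    also have "\<dots> = 0"
      using d q_pos by (simp add: poly_lift_power_q zero_power)
    finally show ?thesis
      by (simp only: emb_eq_0_iff)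
  qed
  then show "d \<in> D"
    using d unfolding dual_code_def code_h1_h2_eq by auto
qed

definition dual_generator :: "'a poly" where
  "dual_generator = [:- emb_inv \<zeta>, 1:] * conj_poly \<delta>"

lemma degree_dual_generator: "degree dual_generator = 3"
  unfolding dual_generator_def by (subst degree_mult_eq) (simp_all add: conj_poly_nonzero degree_conj_poly)

lemma poly_lift_dual_generator:
  "poly (lift dual_generator) x = (x - \<zeta>) * ((x - \<delta>) * (x - \<delta> ^ q))"
  unfolding dual_generator_def lift_mult poly_mult poly_lift_conj_poly
  using zeta_in_Fq by (simp add: Fq_def)

lemma dual_eq_multiples: "D = {d. degree d < n \<and> dual_generator dvd d}"
proof (intro set_eqI iffI)
  fix d assume "d \<in> D"
  then have d: "degree d < n" "poly (lift d) \<zeta> = 0" "poly (lift d) \<delta> = 0"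
    by (simp_all add: mem_dual_iff)
  have "dual_generator dvd d"
  proof (rule dvd_if_lifted_roots[of _ "{\<zeta>, \<delta>, \<delta> ^ q}"])
    have "\<zeta> \<noteq> \<delta>" "\<zeta> \<noteq> \<delta> ^ q" "\<delta> \<noteq> \<delta> ^ q"
      using zeta_in_Fq delta_notin_Fq power_q_notin_Fq[OF delta_notin_Fq] by (auto simp: in_Fq_iff)
    then show "degree dual_generator \<le> card {\<zeta>, \<delta>, \<delta> ^ q}"
      by (simp add: degree_dual_generator)
    show "dual_generator \<noteq> 0"
      using degree_dual_generator by auto
  qed (use d q_pos in \<open>auto simp: poly_lift_dual_generator poly_lift_power_q zero_power\<close>)
  with d show "d \<in> {d. degree d < n \<and> dual_generator dvd d}"
    by simp
next
  fix d assume "d \<in> {d. degree d < n \<and> dual_generator dvd d}"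
  then show "d \<in> D"
    by (auto simp: mem_dual_iff poly_lift_dual_generator intro: poly_lift_eq_0_if_dvd)
qed

lemma card_dual: "card D = q ^ (n - 3)"
  unfolding dual_eq_multiples using degree_dual_generator q_less_n q_ge_2
  by (subst card_multiples_degree_less) (auto simp: CARD_base)

lemma finite_dual: "finite D"
  using card_dual q_ge_2 by (intro card_ge_0_finite) simp

lemma is_cyclic_dual: "is_cyclic n D"
  unfolding is_cyclic_def
proof
  fix d assume "d \<in> D"
  then have d: "degree d < n" "poly (lift d) \<zeta> = 0" "poly (lift d) \<delta> = 0"
    by (simp_all add: mem_dual_iff)
  define s where "s = (monom 1 1 * d) mod Xn"
  have "Xn \<noteq> 0" "degree Xn = n"
    using degree_monom_1_minus_1[OF n_pos, where 'a='a] n_pos by auto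
  then have "degree s < n"
    unfolding s_def using degree_mod_less[of Xn "monom 1 1 * d"] n_pos by fastforce
  moreover have "poly (lift s) x = 0" if "x \<noteq> 0" "poly (lift d) x = 0" for x
  proof -
    have "poly (lift (monom 1 1 * d)) x = poly (lift (Xn * ((monom 1 1 * d) div Xn) + s)) x"
      unfolding s_def mult_div_mod_eq ..
    with that show ?thesis
      by (simp add: poly_monom power_n)
  qed
  ultimately have "s \<in> D"
    using d by (simp add: mem_dual_iff)
  then show "(monom 1 1 * d) mod Xn \<in> D"
    unfolding s_def .
qed

definition supp :: "'a poly \<Rightarrow> nat set" where
  "supp d = {i. i < n \<and> coeff d i \<noteq> 0}"

text \<open>Since \<delta> = \<zeta> \<rho>, a dual word d is a vanishing combination of the \<alpha> d i and of the
  \<alpha> d i \<rho>^i, with all \<alpha> d i in F_q.\<close>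
definition \<alpha> :: "'a poly \<Rightarrow> nat \<Rightarrow> 'b" where
  "\<alpha> d i = emb (coeff d i) * \<zeta> ^ i"

lemma hamming_wt_eq_card_supp: "hamming_wt n d = card (supp d)"
  unfolding hamming_wt_def supp_def ..

lemma finite_supp [simp]: "finite (supp d)"
  unfolding supp_def by simp

lemma alpha_in_Fq: "\<alpha> d i \<in> Fq"
  unfolding \<alpha>_def by (intro Fq_mult Fq_power zeta_in_Fq) simp

lemma alpha_eq_0_iff: "\<alpha> d i = 0 \<longleftrightarrow> coeff d i = 0"
  unfolding \<alpha>_def by simp

lemma poly_lift_zeta_eq_supp_sum:
  assumes "degree d < n"
  shows "poly (lift d) \<zeta> = (\<Sum>i\<in>supp d. \<alpha> d i)"
proof -
  have "poly (lift d) \<zeta> = (\<Sum>i<n. \<alpha> d i)"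
    unfolding \<alpha>_def by (rule poly_lift_eq_sum[OF assms])
  also have "\<dots> = (\<Sum>i\<in>supp d. \<alpha> d i)"
    by (rule sum.mono_neutral_right) (auto simp: supp_def \<alpha>_def)
  finally show ?thesis .
qed

lemma poly_lift_delta_eq_supp_sum:
  assumes "degree d < n"
  shows "poly (lift d) \<delta> = (\<Sum>i\<in>supp d. \<alpha> d i * \<rho> ^ i)"
proof -
  have "poly (lift d) \<delta> = (\<Sum>i<n. \<alpha> d i * \<rho> ^ i)"
    unfolding \<alpha>_def by (simp add: poly_lift_eq_sum[OF assms] delta_eq power_mult_distrib mult.assoc)
  also have "\<dots> = (\<Sum>i\<in>supp d. \<alpha> d i * \<rho> ^ i)"
    by (rule sum.mono_neutral_right) (auto simp: supp_def \<alpha>_def)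
  finally show ?thesis .
qed

lemma dual_supp_equations:
  assumes "d \<in> D"
  shows "(\<Sum>i\<in>supp d. \<alpha> d i) = 0" "(\<Sum>i\<in>supp d. \<alpha> d i * \<rho> ^ i) = 0"
  using assms poly_lift_zeta_eq_supp_sum[of d] poly_lift_delta_eq_supp_sum[of d]
  by (simp_all add: mem_dual_iff)

lemma dual_weight_ge_3:
  assumes d: "d \<in> D" "d \<noteq> 0"
  shows "3 \<le> hamming_wt n d"
proof -
  have "hamming_wt n d \<noteq> 0"
    using d hamming_wt_eq_0_iff[of d n] by (simp add: mem_dual_iff)
  then have "card (supp d) \<noteq> 0"
    by (simp add: hamming_wt_eq_card_supp)
  moreover have "card (supp d) \<noteq> 1"
  proof
    assume "card (supp d) = 1"
    then obtain i where "supp d = {i}"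
      by (auto simp: card_1_singleton_iff)
    with dual_supp_equations(1)[OF d(1)] show False
      by (auto simp: supp_def alpha_eq_0_iff)
  qed
  moreover have "card (supp d) \<noteq> 2"
  proof
    assume "card (supp d) = 2"
    then obtain i j where supp: "supp d = {i, j}" "i \<noteq> j"
      by (auto simp: card_2_iff)
    then have ij: "i < n" "j < n" "\<alpha> d i \<noteq> 0"
      unfolding supp_def by (auto simp: alpha_eq_0_iff)
    have "\<alpha> d j = - \<alpha> d i"
      using dual_supp_equations(1)[OF d(1)] supp by (simp add: add_eq_0_iff)
    then have "\<alpha> d i * (\<rho> ^ i - \<rho> ^ j) = 0"
      using dual_supp_equations(2)[OF d(1)] supp by (simp add: algebra_simps)
    with ij supp(2) show False
      by (simp add: rho_power_inj)
  qed
  ultimately show ?thesis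
    unfolding hamming_wt_eq_card_supp by linarith
qed

lemma weight_freq_dual_1_2: "weight_freq n D 1 = 0" "weight_freq n D 2 = 0"
proof -
  have "{c \<in> D. hamming_wt n c = 1} = {}" "{c \<in> D. hamming_wt n c = 2} = {}"
    using dual_weight_ge_3 by (fastforce simp: hamming_wt_def)+
  then show "weight_freq n D 1 = 0" "weight_freq n D 2 = 0"
    unfolding weight_freq_def by (simp_all only: card.empty)
qed

definition nonzero_Fq_pairs :: "('b \<times> 'b) set" where
  "nonzero_Fq_pairs = {(a1, a2). a1 \<in> Fq - {0} \<and> a2 \<in> Fq - {0} \<and> a1 + a2 \<noteq> 0}"

lemma card_nonzero_Fq_pairs: "card nonzero_Fq_pairs = (q - 1) * (q - 2)"
proof -
  have "card (Fq - {0, - a1}) = q - 2" if "a1 \<in> Fq - {0}" for a1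
    using that card_Fq Fq_uminus[of a1] by (subst card_Diff_subset) auto
  then have "card (SIGMA a1:Fq - {0}. Fq - {0, - a1}) = (\<Sum>a1\<in>Fq - {0}. q - 2)"
    by (subst card_SigmaI) (auto simp: Fq_def)
  moreover have "nonzero_Fq_pairs = (SIGMA a1:Fq - {0}. Fq - {0, - a1})"
    unfolding nonzero_Fq_pairs_def by (auto simp: add_eq_0_iff)
  ultimately show ?thesis
    using card_Fq by (simp add: Fq_def)
qed

lemma card_second_point:
  assumes "(a1, a2) \<in> nonzero_Fq_pairs" "y1 \<noteq> 0"
  shows "card {y2. y2 \<noteq> 0 \<and> y2 \<noteq> y1 \<and> a1 * y1 + a2 * y2 \<noteq> 0} = n - 2"
proof -
  have a: "a1 \<noteq> 0" "a2 \<noteq> 0" "a1 + a2 \<noteq> 0"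
    using assms(1) by (auto simp: nonzero_Fq_pairs_def)
  have "- a1 * y1 / a2 \<noteq> y1"
  proof
    assume "- a1 * y1 / a2 = y1"
    then have "a1 * y1 + a2 * y1 = 0"
      using a by (simp add: field_simps add_eq_0_iff)
    then have "(a1 + a2) * y1 = 0"
      by (simp add: distrib_right)
    with a assms(2) show False
      by simp
  qed
  have "a1 * y1 + a2 * y2 = 0 \<longleftrightarrow> y2 = - a1 * y1 / a2" for y2
    using a by (auto simp: field_simps eq_neg_iff_add_eq_0 add.commute mult.commute)
  then have "{y2. y2 \<noteq> 0 \<and> y2 \<noteq> y1 \<and> a1 * y1 + a2 * y2 \<noteq> 0} = {y. y \<noteq> 0} - {y1, - a1 * y1 / a2}"
    by auto
  also have "card \<dots> = n - 2"
    using \<open>- a1 * y1 / a2 \<noteq> y1\<close> a assms(2) card_nonzero by (subst card_Diff_subset) auto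
  finally show ?thesis .
qed

text \<open>The values \<alpha> d i, \<alpha> d j and points \<rho>^i, \<rho>^j of a weight-3 dual word with support
  ordered as (i, j, k); the third value and point are recovered from the two linear
  equations.\<close>
definition weight3_data :: "(('b \<times> 'b) \<times> 'b \<times> 'b) set" where
  "weight3_data = (SIGMA a:nonzero_Fq_pairs. SIGMA y1:{y. y \<noteq> 0}.
     {y2. y2 \<noteq> 0 \<and> y2 \<noteq> y1 \<and> fst a * y1 + snd a * y2 \<noteq> 0})"

lemma card_weight3_data: "card weight3_data = (q - 1) * (q - 2) * (n * (n - 2))"
proof -
  let ?Y = "{y :: 'b. y \<noteq> 0}"
  let ?second = "\<lambda>a y1. {y2. y2 \<noteq> 0 \<and> y2 \<noteq> y1 \<and> fst a * y1 + snd a * y2 \<noteq> 0}"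
  have "card weight3_data = (\<Sum>a\<in>nonzero_Fq_pairs. card (SIGMA y1:?Y. ?second a y1))"
    unfolding weight3_data_def by (intro card_SigmaI) auto
  also have "\<dots> = (\<Sum>a\<in>nonzero_Fq_pairs. \<Sum>y1\<in>?Y. n - 2)"
  proof (rule sum.cong)
    fix a assume "a \<in> nonzero_Fq_pairs"
    have "card (SIGMA y1:?Y. ?second a y1) = (\<Sum>y1\<in>?Y. card (?second a y1))"
      by (intro card_SigmaI) auto
    also have "\<dots> = (\<Sum>y1\<in>?Y. n - 2)"
    proof (rule sum.cong)
      fix y1 assume "y1 \<in> ?Y"
      then show "card (?second a y1) = n - 2"
        using \<open>a \<in> nonzero_Fq_pairs\<close> card_second_point[of "fst a" "snd a" y1] by simp
    qed simp
    finally show "card (SIGMA y1:?Y. ?second a y1) = (\<Sum>y1\<in>?Y. n - 2)" .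
  qed simp
  finally show ?thesis
    using card_nonzero by (simp add: card_nonzero_Fq_pairs)
qed

definition ordered_weight3 :: "('a poly \<times> nat \<times> nat \<times> nat) set" where
  "ordered_weight3 = (SIGMA d:{d \<in> D. hamming_wt n d = 3}. ordered_triples (supp d))"

lemma card_ordered_weight3: "card ordered_weight3 = 6 * weight_freq n D 3"
proof -
  have "card ordered_weight3 = (\<Sum>d\<in>{d \<in> D. hamming_wt n d = 3}. card (ordered_triples (supp d)))"
    unfolding ordered_weight3_def using finite_dual by (intro card_SigmaI) (auto intro: finite_ordered_triples)
  also have "\<dots> = (\<Sum>d\<in>{d \<in> D. hamming_wt n d = 3}. 6)"
    by (intro sum.cong refl) (simp add: card_ordered_triples hamming_wt_eq_card_supp)
  finally show ?thesis
    by (simp add: weight_freq_def)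
qed

lemma mem_ordered_weight3_iff: "(d, i, j, k) \<in> ordered_weight3 \<longleftrightarrow>
    d \<in> D \<and> supp d = {i, j, k} \<and> i \<noteq> j \<and> i \<noteq> k \<and> j \<noteq> k"
  unfolding ordered_weight3_def ordered_triples_def by (auto simp: hamming_wt_eq_card_supp)

lemma ordered_weight3_facts:
  assumes "(d, i, j, k) \<in> ordered_weight3"
  shows "i < n" "j < n" "k < n" "i \<noteq> j" "i \<noteq> k" "j \<noteq> k"
    and "\<alpha> d i \<noteq> 0" "\<alpha> d j \<noteq> 0" "\<alpha> d k \<noteq> 0"
    and "\<alpha> d i + \<alpha> d j + \<alpha> d k = 0"
    and "\<alpha> d i * \<rho> ^ i + \<alpha> d j * \<rho> ^ j + \<alpha> d k * \<rho> ^ k = 0"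
    and "\<And>l. l \<notin> {i, j, k} \<Longrightarrow> coeff d l = 0"
proof -
  have d: "d \<in> D" and supp: "supp d = {i, j, k}" and distinct: "i \<noteq> j" "i \<noteq> k" "j \<noteq> k"
    using assms by (simp_all add: mem_ordered_weight3_iff)
  then have "i \<in> supp d" "j \<in> supp d" "k \<in> supp d"
    by auto
  then show "i < n" "j < n" "k < n" "\<alpha> d i \<noteq> 0" "\<alpha> d j \<noteq> 0" "\<alpha> d k \<noteq> 0"
    unfolding supp_def by (auto simp: alpha_eq_0_iff)
  show "i \<noteq> j" "i \<noteq> k" "j \<noteq> k"
    by (fact distinct)+
  show "\<alpha> d i + \<alpha> d j + \<alpha> d k = 0"
    using dual_supp_equations(1)[OF d] supp distinct by (simp add: add.assoc)
  show "\<alpha> d i * \<rho> ^ i + \<alpha> d j * \<rho> ^ j + \<alpha> d k * \<rho> ^ k = 0"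
    using dual_supp_equations(2)[OF d] supp distinct by (simp add: add.assoc)
  fix l assume "l \<notin> {i, j, k}"
  then show "coeff d l = 0"
    using supp d by (cases "l < n") (auto simp: supp_def mem_dual_iff coeff_eq_0)
qed

lemma ordered_weight3_exists:
  assumes ijk: "i < n" "j < n" "k < n" "i \<noteq> j" "i \<noteq> k" "j \<noteq> k"
    and a: "a1 \<in> Fq - {0}" "a2 \<in> Fq - {0}" "a3 \<in> Fq - {0}"
    and eq: "a1 + a2 + a3 = 0" "a1 * \<rho> ^ i + a2 * \<rho> ^ j + a3 * \<rho> ^ k = 0"
  obtains d where "(d, i, j, k) \<in> ordered_weight3" "\<alpha> d i = a1" "\<alpha> d j = a2"
proof -
  have in_range: "a1 / \<zeta> ^ i \<in> range emb" "a2 / \<zeta> ^ j \<in> range emb" "a3 / \<zeta> ^ k \<in> range emb"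
    using a zeta_in_Fq unfolding Fq_def[symmetric] by (auto intro: Fq_divide Fq_power)
  define d where "d = monom (emb_inv (a1 / \<zeta> ^ i)) i + monom (emb_inv (a2 / \<zeta> ^ j)) j
    + monom (emb_inv (a3 / \<zeta> ^ k)) k"
  have emb_coeff_d: "emb (coeff d l) =
      (if l = i then a1 / \<zeta> ^ i else if l = j then a2 / \<zeta> ^ j else if l = k then a3 / \<zeta> ^ k else 0)" for l
    unfolding d_def using ijk in_range by (auto simp: coeff_monom)
  have \<alpha>_d: "\<alpha> d i = a1" "\<alpha> d j = a2" "\<alpha> d k = a3"
    using ijk by (auto simp: \<alpha>_def emb_coeff_d)
  have supp_d: "supp d = {i, j, k}"
    using ijk a by (auto simp: supp_def emb_coeff_d simp flip: emb_eq_0_iff)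
  have "degree d < n"
  proof -
    have "degree d \<le> n - 1"
      using ijk by (intro degree_le) (auto simp: emb_coeff_d simp flip: emb_eq_0_iff)
    then show ?thesis
      using n_pos by simp
  qed
  moreover have "poly (lift d) \<zeta> = 0" "poly (lift d) \<delta> = 0"
    using poly_lift_zeta_eq_supp_sum[OF \<open>degree d < n\<close>] poly_lift_delta_eq_supp_sum[OF \<open>degree d < n\<close>]
      supp_d ijk \<alpha>_d eq by (simp_all add: add.assoc)
  ultimately have "(d, i, j, k) \<in> ordered_weight3"
    using supp_d ijk by (simp add: mem_ordered_weight3_iff mem_dual_iff)
  with \<alpha>_d that show ?thesis
    by blast
qed

definition weight3_coords :: "'a poly \<times> nat \<times> nat \<times> nat \<Rightarrow> ('b \<times> 'b) \<times> 'b \<times> 'b" where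
  "weight3_coords = (\<lambda>(d, i, j, k). ((\<alpha> d i, \<alpha> d j), \<rho> ^ i, \<rho> ^ j))"

lemma weight3_coords_in_data: "t \<in> ordered_weight3 \<Longrightarrow> weight3_coords t \<in> weight3_data"
proof -
  assume "t \<in> ordered_weight3"
  then obtain d i j k where t: "t = (d, i, j, k)" "(d, i, j, k) \<in> ordered_weight3"
    by (cases t) auto
  note F = ordered_weight3_facts[OF t(2)]
  have "\<alpha> d i + \<alpha> d j = - \<alpha> d k" "\<alpha> d i * \<rho> ^ i + \<alpha> d j * \<rho> ^ j = - (\<alpha> d k * \<rho> ^ k)"
    using F(10,11) by (simp_all add: eq_neg_iff_add_eq_0)
  moreover have "\<rho> ^ j \<noteq> \<rho> ^ i"
    using F(1,2,4) by (simp add: rho_power_inj)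
  ultimately show ?thesis
    unfolding t weight3_coords_def weight3_data_def nonzero_Fq_pairs_def
    using F(7-9) alpha_in_Fq by auto
qed

lemma inj_on_weight3_coords: "inj_on weight3_coords ordered_weight3"
proof (rule inj_onI)
  fix t t' assume "t \<in> ordered_weight3" "t' \<in> ordered_weight3" "weight3_coords t = weight3_coords t'"
  then obtain d i j k d' i' j' k' where t: "t = (d, i, j, k)" "t' = (d', i', j', k')"
    and mem: "(d, i, j, k) \<in> ordered_weight3" "(d', i', j', k') \<in> ordered_weight3"
    and eq: "\<rho> ^ i = \<rho> ^ i'" "\<rho> ^ j = \<rho> ^ j'" "\<alpha> d i = \<alpha> d' i'" "\<alpha> d j = \<alpha> d' j'"
    by (cases t, cases t') (auto simp: weight3_coords_def)
  note F = ordered_weight3_facts[OF mem(1)] and F' = ordered_weight3_facts[OF mem(2)]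
  have ii: "i' = i" and jj: "j' = j"
    using eq(1,2) F(1,2) F'(1,2) by (simp_all add: rho_power_inj)
  have ak: "\<alpha> d k = \<alpha> d' k'"
    using F(10) F'(10) eq(3,4) by (simp add: add_eq_0_iff)
  moreover have "\<alpha> d k * \<rho> ^ k = \<alpha> d' k' * \<rho> ^ k'"
    using F(11) F'(11) eq by (simp add: add_eq_0_iff)
  ultimately have kk: "k' = k"
    using F(3,9) F'(3) by (simp add: rho_power_inj)
  have "coeff d l = coeff d' l" for l
  proof (cases "l \<in> {i, j, k}")
    case True
    then show ?thesis
      using eq(3,4) ak ii jj kk by (auto simp: \<alpha>_def)
  next
    case False
    then show ?thesis
      using F(12) F'(12) ii jj kk by simp
  qed
  then show "t = t'"
    unfolding t by (simp add: poly_eq_iff ii jj kk)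
qed

lemma weight3_data_subset_image: "weight3_data \<subseteq> weight3_coords ` ordered_weight3"
proof
  fix x assume "x \<in> weight3_data"
  then obtain a1 a2 y1 y2 where x: "x = ((a1, a2), y1, y2)" and
    a: "a1 \<in> Fq - {0}" "a2 \<in> Fq - {0}" "a1 + a2 \<noteq> 0" and
    y: "y1 \<noteq> 0" "y2 \<noteq> 0" "y2 \<noteq> y1" "a1 * y1 + a2 * y2 \<noteq> 0"
    unfolding weight3_data_def nonzero_Fq_pairs_def by auto
  define y3 where "y3 = (a1 * y1 + a2 * y2) / (a1 + a2)"
  have "y3 \<noteq> 0"
    using a y unfolding y3_def by simp
  have "y3 \<noteq> y1" "y3 \<noteq> y2"
    using a y unfolding y3_def by (auto simp: field_simps)
  obtain i where i: "i < n" "y1 = \<rho> ^ i"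
    by (rule nonzero_eq_rho_power[OF y(1)])
  obtain j where j: "j < n" "y2 = \<rho> ^ j"
    by (rule nonzero_eq_rho_power[OF y(2)])
  obtain k where k: "k < n" "y3 = \<rho> ^ k"
    by (rule nonzero_eq_rho_power[OF \<open>y3 \<noteq> 0\<close>])
  have distinct: "i \<noteq> j" "i \<noteq> k" "j \<noteq> k"
    using i j k y(3) \<open>y3 \<noteq> y1\<close> \<open>y3 \<noteq> y2\<close> by auto
  have a3: "- (a1 + a2) \<in> Fq - {0}"
    using a unfolding Diff_iff singleton_iff neg_equal_0_iff_equal by (blast intro: Fq_uminus Fq_add)
  have "a1 + a2 + - (a1 + a2) = 0"
    by (rule right_minus)
  moreover have "a1 * \<rho> ^ i + a2 * \<rho> ^ j + - (a1 + a2) * \<rho> ^ k = 0"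
    using a unfolding i(2)[symmetric] j(2)[symmetric] k(2)[symmetric] y3_def by (simp add: field_simps)
  ultimately obtain d where "(d, i, j, k) \<in> ordered_weight3" "\<alpha> d i = a1" "\<alpha> d j = a2"
    by (rule ordered_weight3_exists[OF i(1) j(1) k(1) distinct a(1,2) a3])
  then show "x \<in> weight3_coords ` ordered_weight3"
    unfolding x weight3_coords_def using i(2) j(2) by force
qed

lemma weight_freq_dual_3: "6 * weight_freq n D 3 = (q - 1) * (q - 2) * (n * (n - 2))"
proof -
  have "weight3_coords ` ordered_weight3 = weight3_data"
    using weight3_coords_in_data weight3_data_subset_image by blast
  then have "card ordered_weight3 = card weight3_data"
    using card_image[OF inj_on_weight3_coords] by simp
  then show ?thesis
    by (simp add: card_ordered_weight3 card_weight3_data)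
qed

lemma min_dist_dual:
  assumes "2 < q"
  shows "min_dist n D = 3"
proof -
  have "n - 2 > 0" "q - 1 > 0" "q - 2 > 0"
    using assms q_less_n by simp_all
  then have "weight_freq n D 3 \<noteq> 0"
    using weight_freq_dual_3 n_pos by (metis mult_is_0 not_less0)
  then obtain d where "d \<in> D" "hamming_wt n d = 3"
    unfolding weight_freq_def by (metis (mono_tags, lifting) card.empty empty_Collect_eq)
  moreover from this have "d \<noteq> 0"
    by (auto simp: hamming_wt_def)
  ultimately show ?thesis
    using dual_weight_ge_3 by (intro min_dist_eqI) auto
qed

lemma code_params_dual:
  assumes "2 < q"
  shows "code_params n (q ^ 2 - 4) 3 D"
proof -
  have "n - 3 = q ^ 2 - 4"
    unfolding n_def by simp
  then show ?thesis
    unfolding code_params_def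
    using is_linear_code_dual_code[OF n_pos] card_dual min_dist_dual[OF assms]
    by (simp add: CARD_base)
qed

lemma weight_freq_dual_3_formula:
  "real (weight_freq n D 3) = (real q ^ 2 - 3) * (real q ^ 2 - 1) * (real q - 2) * (real q - 1) / 6"
proof -
  have "6 * real (weight_freq n D 3) = real ((q - 1) * (q - 2) * (n * (n - 2)))"
    using weight_freq_dual_3 by (metis of_nat_mult of_nat_numeral)
  moreover have "real n = real q ^ 2 - 1" "real (n - 2) = real q ^ 2 - 3"
    using q_less_n q_ge_2 unfolding n_def by (simp_all add: of_nat_diff)
  ultimately show ?thesis
    using q_ge_2 by (simp add: of_nat_diff field_simps)
qed

end

theorem theorem1:
  fixes emb :: "'a::{field,finite} \<Rightarrow> 'b::{field,finite}"
    and \<gamma> :: 'b and e1 e2 :: int and q n :: nat and h :: "int \<Rightarrow> 'a poly"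
  assumes q_def: "q = CARD('a)"
    and ext: "CARD('b) = q ^ 2"
    and emb: "field_embedding emb"
    and prim: "primitive_element \<gamma>"
    and h_def: "\<And>a. h a = min_poly emb (\<gamma> powi (- a))"
    and n_def: "n = q ^ 2 - 1"
    and g1: "gcd (int q - 1) (2 * e1 - e2) = 1"
    and g2: "gcd (int q + 1) e2 = 1"
  shows
    "degree (h ((int q + 1) * e1)) = 1 \<and> degree (h e2) = 2
     \<and> h ((int q + 1) * e1) dvd (monom 1 n - 1) \<and> h e2 dvd (monom 1 n - 1)
     \<and> cyclic_code_pc n (h ((int q + 1) * e1)) \<noteq> cyclic_code_pc n (h e2)
     \<and> is_linear_code n (cyclic_code_pc n (h ((int q + 1) * e1)))
     \<and> is_linear_code n (cyclic_code_pc n (h e2))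
     \<and> nonzero_weights n (cyclic_code_pc n (h ((int q + 1) * e1))) = {q ^ 2 - 1}
     \<and> nonzero_weights n (cyclic_code_pc n (h e2)) = {q * (q - 1)}
     \<and> (let C = cyclic_code_pc n (h ((int q + 1) * e1) * h e2);
            D = dual_code n C in
          h ((int q + 1) * e1) * h e2 dvd (monom 1 n - 1)
        \<and> code_params n 3 (q * (q - 1) - 1) C
        \<and> griesmer_optimal n 3 (q * (q - 1) - 1) TYPE('a)
        \<and> nonzero_weights n C = {q * (q - 1) - 1, q * (q - 1), q ^ 2 - 1}
        \<and> card (nonzero_weights n C) = 3
        \<and> weight_freq n C 0 = 1
        \<and> weight_freq n C (q * (q - 1) - 1) = (q - 1) * (q ^ 2 - 1)
        \<and> weight_freq n C (q * (q - 1)) = q ^ 2 - 1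
        \<and> weight_freq n C (q ^ 2 - 1) = q - 1
        \<and> weight_freq n D 1 = 0 \<and> weight_freq n D 2 = 0
        \<and> real (weight_freq n D 3) =
            (real q ^ 2 - 3) * (real q ^ 2 - 1) * (real q - 2) * (real q - 1) / 6
        \<and> (q > 2 \<longrightarrow> is_cyclic n D \<and> code_params n (q ^ 2 - 4) 3 D))"
proof -
  interpret code_setting emb q \<gamma> e1 e2 n
    by unfold_locales (use assms in auto)
  have h: "h ((int q + 1) * e1) = h1" "h e2 = h2"
    using h_def min_poly_eq_h1 min_poly_eq_h2 by simp_all
  have weights: "q ^ 2 - 1 = n" "q * (q - 1) = n + 1 - q" "q * (q - 1) - 1 = n - q"
    using q_ge_2 unfolding n_def by (auto simp: power2_eq_square diff_mult_distrib2)
  have "n - q < n + 1 - q" "n + 1 - q < n"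
    using q_less_n q_ge_2 by linarith+
  then have "card {n - q, n + 1 - q, n} = 3"
    by simp
  moreover have "griesmer_optimal n 3 (n - q) TYPE('a)"
    using griesmer_optimal_length_q2_minus_1[where 'a='a] weights by (simp add: CARD_base n_def)
  ultimately show ?thesis
    unfolding h weights Let_def
    using degree_h1 degree_h2 h1_dvd_Xn h2_dvd_Xn h1_h2_dvd_Xn code_h1_ne_code_h2
      is_linear_code_cyclic_code_pc[OF n_pos, of h1] is_linear_code_cyclic_code_pc[OF n_pos, of h2]
      nonzero_weights_code_h1 nonzero_weights_code_h2
      code_params_code_h1_h2 nonzero_weights_code_h1_h2 weight_distribution_code_h1_h2
      weight_freq_dual_1_2 weight_freq_dual_3_formula is_cyclic_dual code_params_dual
    by (simp add: mult.commute)
qed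

end
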